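(* Assume the Framework and the Purification Postulate. Let $\rho\in\mathfrak S(\mathrm A)$ and let $\{\mathcal A_i\}_{i\in X}$ be a test from $\mathrm A$ to $\mathrm A$. Then $\sum_{i\in X}\mathcal A_i\,\sigma=\sigma$ for all $\sigma\in D_\rho$ (the test is non-disturbing upon input of $\rho$) if and only if there are probabilities $p_i\ge 0$ such that $\mathcal A_i\,\sigma=p_i\,\sigma$ for all $\sigma\in D_\rho$ and all $i\in X$. In particular, if $\rho$ is internal, a test satisfies $\sum_i\mathcal A_i\sigma=\sigma$ for all states $\sigma$ of $\mathrm A$ iff $\mathcal A_i\sigma=p_i\sigma$ for all states $\sigma$ of $\mathrm A$ and all $i$.
   Context: Framework. We work in an operational-probabilistic theory: there is a collection of systems $\mathrm A,\mathrm B,\dots$, closed under a composition $\mathrm A\mathrm B$ (associative, symmetric up to a reversible swap, with a trivial system $\mathrm I$ satisfying $\mathrm A\mathrm I=\mathrm A$); for each pair of systems a set $\mathfrak T(\mathrm A,\mathrm B)$ of transformations; a test from $\mathrm A$ to $\mathrm B$ is a finite collection $\{\mathcal C_i\}_{i\in X}\subseteq\mathfrak T(\mathrm A,\mathrm B)$, and every transformation belongs to some test. Tests are closed under sequential composition, parallel composition ($\otimes$), coarse-graining (summing outcomes over the blocks of a partition of $X$) and conditioning (choosing the next test depending on the outcome of the previous one). States of $\mathrm A$ are the elements of $\mathfrak S(\mathrm A):=\mathfrak T(\mathrm I,\mathrm A)$, effects are the elements of $\mathfrak T(\mathrm A,\mathrm I)$, and transformations $\mathrm I\to\mathrm I$ are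 probabilities in $[0,1]$ (those of a test sum to $1$; composition is multiplication). An effect $a$ and a state $\rho$ give the probability $(a|\rho)$. States (effects) are identified when they give equal probabilities on all effects (states); transformations $\mathcal C,\mathcal C'$ are identified when $\mathcal C\otimes\mathcal I_{\mathrm S}$ and $\mathcal C'\otimes\mathcal I_{\mathrm S}$ act identically on all states of $\mathrm A\mathrm S$ for every system $\mathrm S$. States span a finite-dimensional real vector space $\mathfrak S_{\mathbb R}(\mathrm A)$, transformations act linearly, and $\mathfrak T_{\mathbb R}(\mathrm A,\mathrm B)$ is the real span of $\mathfrak T(\mathrm A,\mathrm B)$. Standing assumptions: (i) causality: each system $\mathrm A$ has a unique deterministic effect $e_{\mathrm A}$ (the effect forming a one-outcome observation test), and $e_{\mathrm A\mathrm B}=e_{\mathrm A}\otimes e_{\mathrm B}$; (ii) local discriminability: if two states of $\mathrm A\mathrm B$ differ, some product effect $a\otimes b$ gives them different probabilities; (iii) all sets of states are closed, the theory is not deterministic (hence all sets of states, effects and transformations are convex), and perfectly distinguishable states exist. A state $\rho$ is normalized if $(e|\rho)=1$; $\mathfrak S_1(\mathrm A)$ is the set of normalized states. A channel is a $\mathcal C\in\mathfrak T(\mathrm A,\mathrm B)$ with $e_{\mathrm B}\circ\mathcal C=e_{\mathrm A}$. A channel $\mathcal U\in\mathfrak T(\mathrm A,\mathrm B)$ is reversible if some channel $\mathcal W\in\mathfrak T(\mathrm B,\mathrm A)$ satisfies $\mathcal W\mathcal U=\mathcal I_{\mathrm A}$, $\mathcal U\mathcal W=\mathcal I_{\mathrm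 B}$; $\mathbf G_{\mathrm A}$ is the group of reversible channels on $\mathrm A$. The marginal of a state $\sigma$ of $\mathrm A\mathrm B$ on $\mathrm A$ is $(\mathcal I_{\mathrm A}\otimes e_{\mathrm B})\sigma$. Refinement. For $\mathcal C\in\mathfrak T(\mathrm A,\mathrm B)$, write $\mathcal D\prec\mathcal C$ if there are a test $\{\mathcal D_j\}_{j\in Y}$ and $Y_0\subseteq Y$ with $\mathcal C=\sum_{j\in Y_0}\mathcal D_j$ and $\mathcal D\in\{\mathcal D_j\}_{j\in Y_0}$; the refinement set is $D_{\mathcal C}=\{\mathcal D:\mathcal D\prec\mathcal C\}$. $\mathcal C$ is atomic if $\mathcal D\prec\mathcal C$ implies $\mathcal D=\lambda\mathcal C$ for some $\lambda\in[0,1]$. A pure state is an atomic state; a state is mixed otherwise. A state $\omega$ of $\mathrm A$ is internal if $\mathrm{Span}(D_\omega)=\mathfrak S_{\mathbb R}(\mathrm A)$. Purification Postulate. For every $\rho\in\mathfrak S_1(\mathrm A)$ there are a system $\mathrm B$ and a pure $\Psi\in\mathfrak S_1(\mathrm A\mathrm B)$ with $(\mathcal I_{\mathrm A}\otimes e_{\mathrm B})\Psi=\rho$ (a purification of $\rho$, with purifying system $\mathrm B$); and if $\Psi,\Psi'\in\mathfrak S_1(\mathrm A\mathrm B)$ are purifications of the same state, then $\Psi'=(\mathcal I_{\mathrm A}\otimes\mathcal U)\Psi$ for some $\mathcal U\in\mathbf G_{\mathrm B}$. *)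

theory Defs
  imports "HOL-Analysis.Analysis" "HOL-Library.Multiset"
begin

text \<open>
An operational-probabilistic theory (after identification of states, effects
and transformations).  Systems are elements of the type 's; all
(generalised) transformations live in one real normed vector space 't.
Tr A B is the set of transformations from A to B, Tests A B the set of tests
from A to B (a test is a finite nonempty list of transformations: list
positions are the outcomes, so repeated transformations are allowed; the order
is irrelevant by the permutation-closure axiom).  cmp D C is the sequential
composition "D after C", tens is the parallel composition, idt A the identity
of A, swp A B the swap from AB to BA.  Linear combinations of transformations
(coarse-graining sums, the spans T_R(A,B)) are taken in 't.
\<close>

record ('s, 't) opt =
  sc    :: "'s \<Rightarrow> 's \<Rightarrow> 's"
  Isys  :: 's
  Tr    :: "'s \<Rightarrow> 's \<Rightarrow> 't set"
  Tests :: "'s \<Rightarrow> 's \<Rightarrow> 't list set"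
  cmp   :: "'t \<Rightarrow> 't \<Rightarrow> 't"
  tens  :: "'t \<Rightarrow> 't \<Rightarrow> 't"
  idt   :: "'s \<Rightarrow> 't"
  swp   :: "'s \<Rightarrow> 's \<Rightarrow> 't"

definition St :: "('s, 't) opt \<Rightarrow> 's \<Rightarrow> 't set" where
  "St \<Theta> A = Tr \<Theta> (Isys \<Theta>) A"

definition Eff :: "('s, 't) opt \<Rightarrow> 's \<Rightarrow> 't set" where
  "Eff \<Theta> A = Tr \<Theta> A (Isys \<Theta>)"

definition pr :: "('s, 't::real_vector) opt \<Rightarrow> 't \<Rightarrow> 't \<Rightarrow> real" where
  "pr \<Theta> a \<rho> = (THE r. cmp \<Theta> a \<rho> = r *\<^sub>R idt \<Theta> (Isys \<Theta>))"

definition det_eff :: "('s, 't) opt \<Rightarrow> 's \<Rightarrow> 't" where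
  "det_eff \<Theta> A = (THE a. [a] \<in> Tests \<Theta> A (Isys \<Theta>))"

definition channel :: "('s, 't) opt \<Rightarrow> 's \<Rightarrow> 's \<Rightarrow> 't \<Rightarrow> bool" where
  "channel \<Theta> A B C \<longleftrightarrow> C \<in> Tr \<Theta> A B \<and> cmp \<Theta> (det_eff \<Theta> B) C = det_eff \<Theta> A"

definition reversible :: "('s, 't) opt \<Rightarrow> 's \<Rightarrow> 's \<Rightarrow> 't \<Rightarrow> bool" where
  "reversible \<Theta> A B U \<longleftrightarrow> channel \<Theta> A B U \<and>
     (\<exists>W. channel \<Theta> B A W \<and> cmp \<Theta> W U = idt \<Theta> A \<and> cmp \<Theta> U W = idt \<Theta> B)"

definition Grev :: "('s, 't) opt \<Rightarrow> 's \<Rightarrow> 't set" where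
  "Grev \<Theta> A = {U. reversible \<Theta> A A U}"

definition normalized :: "('s, 't::real_vector) opt \<Rightarrow> 's \<Rightarrow> 't \<Rightarrow> bool" where
  "normalized \<Theta> A \<rho> \<longleftrightarrow> \<rho> \<in> St \<Theta> A \<and> pr \<Theta> (det_eff \<Theta> A) \<rho> = 1"

definition marg :: "('s, 't) opt \<Rightarrow> 's \<Rightarrow> 's \<Rightarrow> 't \<Rightarrow> 't" where
  "marg \<Theta> A B \<sigma> = cmp \<Theta> (tens \<Theta> (idt \<Theta> A) (det_eff \<Theta> B)) \<sigma>"

definition refines :: "('s, 't::real_vector) opt \<Rightarrow> 's \<Rightarrow> 's \<Rightarrow> 't \<Rightarrow> 't \<Rightarrow> bool" where
  "refines \<Theta> A B D C \<longleftrightarrow>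
     (\<exists>T\<in>Tests \<Theta> A B. \<exists>Y0 \<subseteq> {..<length T}.
        C = (\<Sum>j\<in>Y0. T ! j) \<and> D \<in> (\<lambda>j. T ! j) ` Y0)"

definition refset :: "('s, 't::real_vector) opt \<Rightarrow> 's \<Rightarrow> 's \<Rightarrow> 't \<Rightarrow> 't set" where
  "refset \<Theta> A B C = {D. refines \<Theta> A B D C}"

definition atomic :: "('s, 't::real_vector) opt \<Rightarrow> 's \<Rightarrow> 's \<Rightarrow> 't \<Rightarrow> bool" where
  "atomic \<Theta> A B C \<longleftrightarrow> C \<in> Tr \<Theta> A B \<and>
     (\<forall>D. refines \<Theta> A B D C \<longrightarrow> (\<exists>l. 0 \<le> l \<and> l \<le> 1 \<and> D = l *\<^sub>R C))"

definition pure_state :: "('s, 't::real_vector) opt \<Rightarrow> 's \<Rightarrow> 't \<Rightarrow> bool" where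
  "pure_state \<Theta> A \<rho> \<longleftrightarrow> atomic \<Theta> (Isys \<Theta>) A \<rho>"

definition internal :: "('s, 't::real_vector) opt \<Rightarrow> 's \<Rightarrow> 't \<Rightarrow> bool" where
  "internal \<Theta> A \<omega> \<longleftrightarrow> \<omega> \<in> St \<Theta> A \<and>
     span (refset \<Theta> (Isys \<Theta>) A \<omega>) = span (St \<Theta> A)"

definition OPT :: "('s, 't::real_normed_vector) opt \<Rightarrow> bool" where
  "OPT \<Theta> \<longleftrightarrow>
   (let I = Isys \<Theta>; sc = sc \<Theta>; Tr = Tr \<Theta>; Tests = Tests \<Theta>; cmp = cmp \<Theta>;
        tens = tens \<Theta>; idt = idt \<Theta>; swp = swp \<Theta>; e = det_eff \<Theta>; pr = pr \<Theta> in
   \<comment> \<open>systems\<close>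
   (\<forall>A B C. sc (sc A B) C = sc A (sc B C)) \<and>
   (\<forall>A. sc A I = A \<and> sc I A = A) \<and>
   \<comment> \<open>sequential composition\<close>
   (\<forall>A. idt A \<in> Tr A A) \<and>
   (\<forall>A B C x y. x \<in> Tr A B \<longrightarrow> y \<in> Tr B C \<longrightarrow> cmp y x \<in> Tr A C) \<and>
   (\<forall>A B C D x y z. x \<in> Tr A B \<longrightarrow> y \<in> Tr B C \<longrightarrow> z \<in> Tr C D \<longrightarrow>
        cmp (cmp z y) x = cmp z (cmp y x)) \<and>
   (\<forall>A B x. x \<in> Tr A B \<longrightarrow> cmp x (idt A) = x \<and> cmp (idt B) x = x) \<and>
   \<comment> \<open>transformations act linearly\<close>
   bilinear cmp \<and> bilinear tens \<and>
   \<comment> \<open>parallel composition\<close>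
   (\<forall>A B A' B' x y. x \<in> Tr A B \<longrightarrow> y \<in> Tr A' B' \<longrightarrow> tens x y \<in> Tr (sc A A') (sc B B')) \<and>
   (\<forall>A B C A' B' C' x1 x2 y1 y2. x1 \<in> Tr A B \<longrightarrow> x2 \<in> Tr B C \<longrightarrow>
        y1 \<in> Tr A' B' \<longrightarrow> y2 \<in> Tr B' C' \<longrightarrow>
        tens (cmp x2 x1) (cmp y2 y1) = cmp (tens x2 y2) (tens x1 y1)) \<and>
   (\<forall>A B. tens (idt A) (idt B) = idt (sc A B)) \<and>
   (\<forall>A B A' B' A'' B'' x y z. x \<in> Tr A B \<longrightarrow> y \<in> Tr A' B' \<longrightarrow> z \<in> Tr A'' B'' \<longrightarrow>
        tens (tens x y) z = tens x (tens y z)) \<and>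
   (\<forall>A B x. x \<in> Tr A B \<longrightarrow> tens x (idt I) = x \<and> tens (idt I) x = x) \<and>
   \<comment> \<open>symmetry: reversible swap, natural, coherent\<close>
   (\<forall>A B. swp A B \<in> Tr (sc A B) (sc B A) \<and> [swp A B] \<in> Tests (sc A B) (sc B A) \<and>
          cmp (swp B A) (swp A B) = idt (sc A B)) \<and>
   (\<forall>A. swp A I = idt A) \<and>
   (\<forall>A A' B B' x y. x \<in> Tr A A' \<longrightarrow> y \<in> Tr B B' \<longrightarrow>
        cmp (swp A' B') (tens x y) = cmp (tens y x) (swp A B)) \<and>
   (\<forall>A B C. swp (sc A B) C = cmp (tens (swp A C) (idt B)) (tens (idt A) (swp B C))) \<and>
   \<comment> \<open>tests\<close>
   (\<forall>A B T. T \<in> Tests A B \<longrightarrow> T \<noteq> [] \<and> set T \<subseteq> Tr A B) \<and>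
   (\<forall>A B x. x \<in> Tr A B \<longrightarrow> (\<exists>T\<in>Tests A B. x \<in> set T)) \<and>
   (\<forall>A. [idt A] \<in> Tests A A) \<and>
   (\<forall>A B T T'. T \<in> Tests A B \<longrightarrow> mset T' = mset T \<longrightarrow> T' \<in> Tests A B) \<and>
   (\<forall>A B C T1 T2. T1 \<in> Tests A B \<longrightarrow> T2 \<in> Tests B C \<longrightarrow>
        concat (map (\<lambda>x. map (\<lambda>y. cmp y x) T2) T1) \<in> Tests A C) \<and>
   (\<forall>A B A' B' T1 T2. T1 \<in> Tests A B \<longrightarrow> T2 \<in> Tests A' B' \<longrightarrow>
        concat (map (\<lambda>x. map (\<lambda>y. tens x y) T2) T1) \<in> Tests (sc A A') (sc B B')) \<and>
   (\<forall>A B T (f::nat \<Rightarrow> nat) m. T \<in> Tests A B \<longrightarrow> f ` {..<length T} = {..<m} \<longrightarrow>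
        map (\<lambda>j. \<Sum>i\<in>{i. i < length T \<and> f i = j}. T ! i) [0..<m] \<in> Tests A B) \<and>
   (\<forall>A B C T S. T \<in> Tests A B \<longrightarrow> (\<forall>i<length T. S i \<in> Tests B C) \<longrightarrow>
        concat (map (\<lambda>i. map (\<lambda>y. cmp y (T ! i)) (S i)) [0..<length T]) \<in> Tests A C) \<and>
   \<comment> \<open>probabilities\<close>
   idt I \<noteq> 0 \<and>
   Tr I I = {r *\<^sub>R idt I | r. 0 \<le> r \<and> r \<le> 1} \<and>
   (\<forall>T. T \<in> Tests I I \<longrightarrow> sum_list T = idt I) \<and>
   (\<forall>p::real. 0 \<le> p \<longrightarrow> p \<le> 1 \<longrightarrow> [p *\<^sub>R idt I, (1 - p) *\<^sub>R idt I] \<in> Tests I I) \<and>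
   \<comment> \<open>identification (operational equivalence)\<close>
   (\<forall>A \<rho> \<rho>'. \<rho> \<in> Tr I A \<longrightarrow> \<rho>' \<in> Tr I A \<longrightarrow>
        (\<forall>a\<in>Tr A I. pr a \<rho> = pr a \<rho>') \<longrightarrow> \<rho> = \<rho>') \<and>
   (\<forall>A a a'. a \<in> Tr A I \<longrightarrow> a' \<in> Tr A I \<longrightarrow>
        (\<forall>\<rho>\<in>Tr I A. pr a \<rho> = pr a' \<rho>) \<longrightarrow> a = a') \<and>
   (\<forall>A B C C'. C \<in> Tr A B \<longrightarrow> C' \<in> Tr A B \<longrightarrow>
        (\<forall>S. \<forall>\<rho>\<in>Tr I (sc A S). cmp (tens C (idt S)) \<rho> = cmp (tens C' (idt S)) \<rho>) \<longrightarrow> C = C') \<and>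
   \<comment> \<open>finite dimensionality of the state spaces\<close>
   (\<forall>A. \<exists>F. finite F \<and> Tr I A \<subseteq> span F) \<and>
   \<comment> \<open>(i) causality\<close>
   (\<forall>A. \<exists>!a. [a] \<in> Tests A I) \<and>
   (\<forall>A B. e (sc A B) = tens (e A) (e B)) \<and>
   \<comment> \<open>(ii) local discriminability\<close>
   (\<forall>A B \<rho> \<rho>'. \<rho> \<in> Tr I (sc A B) \<longrightarrow> \<rho>' \<in> Tr I (sc A B) \<longrightarrow> \<rho> \<noteq> \<rho>' \<longrightarrow>
        (\<exists>a\<in>Tr A I. \<exists>b\<in>Tr B I. pr (tens a b) \<rho> \<noteq> pr (tens a b) \<rho>')) \<and>
   \<comment> \<open>(iii) closed state sets, convexity, perfectly distinguishable states\<close>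
   (\<forall>A. closed (Tr I A)) \<and>
   (\<forall>A B. convex (Tr A B)) \<and>
   (\<exists>A \<rho>1 \<rho>2 a1 a2. \<rho>1 \<in> Tr I A \<and> \<rho>2 \<in> Tr I A \<and> [a1, a2] \<in> Tests A I \<and>
        pr a1 \<rho>1 = 1 \<and> pr a2 \<rho>2 = 1 \<and> pr a1 \<rho>2 = 0 \<and> pr a2 \<rho>1 = 0))"

definition purification :: "('s, 't::real_normed_vector) opt \<Rightarrow> bool" where
  "purification \<Theta> \<longleftrightarrow>
   (\<forall>A \<rho>. normalized \<Theta> A \<rho> \<longrightarrow>
      (\<exists>B \<Psi>. normalized \<Theta> (sc \<Theta> A B) \<Psi> \<and> pure_state \<Theta> (sc \<Theta> A B) \<Psi> \<and>
              marg \<Theta> A B \<Psi> = \<rho>)) \<and>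
   (\<forall>A B \<Psi> \<Psi>'. normalized \<Theta> (sc \<Theta> A B) \<Psi> \<longrightarrow> normalized \<Theta> (sc \<Theta> A B) \<Psi>' \<longrightarrow>
      pure_state \<Theta> (sc \<Theta> A B) \<Psi> \<longrightarrow> pure_state \<Theta> (sc \<Theta> A B) \<Psi>' \<longrightarrow>
      marg \<Theta> A B \<Psi> = marg \<Theta> A B \<Psi>' \<longrightarrow>
      (\<exists>U\<in>Grev \<Theta> B. \<Psi>' = cmp \<Theta> (tens \<Theta> (idt \<Theta> A) U) \<Psi>))"

end

theory Submission
  imports Defs
begin

(* The setting is an operational-probabilistic theory with causality, local
   discriminability, closed state sets and a pair of perfectly distinguishable
   states; of the Purification Postulate only the existence of purifications is
   used.

   Easy direction: if every A_i acts on D_rho as a scalar p_i, applying the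
   deterministic effect shows that the p_i sum to 1.
   Main direction: let sigma refine rho, so rho = sigma + tau.  With perfectly
   distinguishable states alpha1, alpha2 of an ancilla C we build the flagged
   state sigma (x) alpha1 + tau (x) alpha2 of AC, normalise it (closedness of
   the state space) and purify it to a pure state Psi of A(CB).  Every state of A
   obtained by applying an effect to the ancilla of Psi refines a multiple of
   rho, so the non-disturbing channel (sum_i A_i) (x) I fixes Psi by local
   discriminability; since Psi is pure, each A_i (x) I multiplies Psi by some
   p_i.  Reading off the flag gives A_i sigma = p_i sigma and A_i tau = p_i tau,
   and rho <> 0 makes p_i independent of sigma.  For internal rho both
   properties pass from D_rho to all states by linearity, D_rho spanning the
   state space. *)

lemma sum_mset_scaleR_left:
  "sum_mset (image_mset (\<lambda>x. f x *\<^sub>R (v::'a::real_vector)) M) = sum_mset (image_mset f M) *\<^sub>R v"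
  by (induction M) (auto simp: scaleR_left_distrib)

lemma scaleR_sum_mset:
  "c *\<^sub>R sum_mset (M::'a::real_vector multiset) = sum_mset (image_mset (\<lambda>x. c *\<^sub>R x) M)"
  by (induction M) (auto simp: scaleR_right_distrib)

lemma sum_mset_nonneg_real:
  "(\<And>x. x \<in># N \<Longrightarrow> 0 \<le> f x) \<Longrightarrow> 0 \<le> sum_mset (image_mset (f::_ \<Rightarrow> real) N)"
  by (induction N) auto

text \<open>A block of a concatenation is a sub-multiset of it; this is how a
  conditioned or sequential test is seen to contain the outcomes we want.\<close>

lemma mset_concat_block: "x \<in> set xs \<Longrightarrow> mset (F x) \<subseteq># mset (concat (map F xs))"
proof (induction xs)
  case Nil then show ?case by simp
next
  case (Cons y ys)
  show ?case
  proof (cases "x = y")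
    case True then show ?thesis by simp
  next
    case False
    then have "mset (F x) \<subseteq># mset (concat (map F ys))" using Cons by simp
    then show ?thesis by (simp add: subset_mset.add_increasing)
  qed
qed

lemma mset_concat_choice:
  "distinct xs \<Longrightarrow> K \<subseteq> set xs \<Longrightarrow> (\<forall>i\<in>K. h i \<in> set (F i)) \<Longrightarrow>
   image_mset h (mset_set K) \<subseteq># mset (concat (map F xs))"
proof (induction xs arbitrary: K)
  case Nil then show ?case by simp
next
  case (Cons x xs)
  have fin: "finite K" using Cons.prems(2) finite_subset by blast
  let ?K' = "K - {x}"
  have IH: "image_mset h (mset_set ?K') \<subseteq># mset (concat (map F xs))"
    using Cons.IH[of ?K'] Cons.prems by auto
  show ?case
  proof (cases "x \<in> K")
    case True
    then have "mset_set K = add_mset x (mset_set ?K')"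
      using fin by (metis finite_Diff insert_Diff mset_set.insert Diff_iff singletonI)
    then have split: "image_mset h (mset_set K) = {#h x#} + image_mset h (mset_set ?K')" by simp
    have "{#h x#} \<subseteq># mset (F x)" using Cons.prems(3) True by simp
    then have "{#h x#} + image_mset h (mset_set ?K') \<subseteq># mset (F x) + mset (concat (map F xs))"
      using IH by (intro subset_mset.add_mono)
    then show ?thesis using split by simp
  next
    case False
    then have "K = ?K'" by blast
    then show ?thesis using IH by (simp add: subset_mset.add_increasing)
  qed
qed

text \<open>The axioms of an operational-probabilistic theory used in this file, all
  of them conjuncts of OPT.\<close>

locale opt_frame =
  fixes \<Theta> :: "('s, 't::real_normed_vector) opt"
  assumes sc_assoc: "sc \<Theta> (sc \<Theta> A B) C = sc \<Theta> A (sc \<Theta> B C)"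
    and sc_unit [simp]: "sc \<Theta> A (Isys \<Theta>) = A" "sc \<Theta> (Isys \<Theta>) A = A"
    and idt_Tr [simp]: "idt \<Theta> A \<in> Tr \<Theta> A A"
    and cmp_Tr: "x \<in> Tr \<Theta> A B \<Longrightarrow> y \<in> Tr \<Theta> B C \<Longrightarrow> cmp \<Theta> y x \<in> Tr \<Theta> A C"
    and cmp_assoc: "x \<in> Tr \<Theta> A B \<Longrightarrow> y \<in> Tr \<Theta> B C \<Longrightarrow> z \<in> Tr \<Theta> C D \<Longrightarrow>
        cmp \<Theta> (cmp \<Theta> z y) x = cmp \<Theta> z (cmp \<Theta> y x)"
    and cmp_idt: "x \<in> Tr \<Theta> A B \<Longrightarrow> cmp \<Theta> x (idt \<Theta> A) = x"
      "x \<in> Tr \<Theta> A B \<Longrightarrow> cmp \<Theta> (idt \<Theta> B) x = x"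
    and cmp_bilinear: "bilinear (cmp \<Theta>)"
    and tens_bilinear: "bilinear (tens \<Theta>)"
    and tens_Tr: "x \<in> Tr \<Theta> A B \<Longrightarrow> y \<in> Tr \<Theta> A' B' \<Longrightarrow> tens \<Theta> x y \<in> Tr \<Theta> (sc \<Theta> A A') (sc \<Theta> B B')"
    and interchange: "x1 \<in> Tr \<Theta> A B \<Longrightarrow> x2 \<in> Tr \<Theta> B C \<Longrightarrow> y1 \<in> Tr \<Theta> A' B' \<Longrightarrow> y2 \<in> Tr \<Theta> B' C' \<Longrightarrow>
        tens \<Theta> (cmp \<Theta> x2 x1) (cmp \<Theta> y2 y1) = cmp \<Theta> (tens \<Theta> x2 y2) (tens \<Theta> x1 y1)"
    and tens_idt: "tens \<Theta> (idt \<Theta> A) (idt \<Theta> B) = idt \<Theta> (sc \<Theta> A B)"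
    and tens_assoc: "x \<in> Tr \<Theta> A B \<Longrightarrow> y \<in> Tr \<Theta> A' B' \<Longrightarrow> z \<in> Tr \<Theta> A'' B'' \<Longrightarrow>
        tens \<Theta> (tens \<Theta> x y) z = tens \<Theta> x (tens \<Theta> y z)"
    and tens_unit: "x \<in> Tr \<Theta> A B \<Longrightarrow> tens \<Theta> x (idt \<Theta> (Isys \<Theta>)) = x"
    and test_Tr: "T \<in> Tests \<Theta> A B \<Longrightarrow> T \<noteq> [] \<and> set T \<subseteq> Tr \<Theta> A B"
    and Tr_in_test: "x \<in> Tr \<Theta> A B \<Longrightarrow> \<exists>T\<in>Tests \<Theta> A B. x \<in> set T"
    and idt_test: "[idt \<Theta> A] \<in> Tests \<Theta> A A"
    and perm_test: "T \<in> Tests \<Theta> A B \<Longrightarrow> mset T' = mset T \<Longrightarrow> T' \<in> Tests \<Theta> A B"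
    and seq_test: "T1 \<in> Tests \<Theta> A B \<Longrightarrow> T2 \<in> Tests \<Theta> B C \<Longrightarrow>
        concat (map (\<lambda>x. map (\<lambda>y. cmp \<Theta> y x) T2) T1) \<in> Tests \<Theta> A C"
    and par_test: "T1 \<in> Tests \<Theta> A B \<Longrightarrow> T2 \<in> Tests \<Theta> A' B' \<Longrightarrow>
        concat (map (\<lambda>x. map (\<lambda>y. tens \<Theta> x y) T2) T1) \<in> Tests \<Theta> (sc \<Theta> A A') (sc \<Theta> B B')"
    and coarse_test: "T \<in> Tests \<Theta> A B \<Longrightarrow> (f::nat \<Rightarrow> nat) ` {..<length T} = {..<m} \<Longrightarrow>
        map (\<lambda>j. \<Sum>i\<in>{i. i < length T \<and> f i = j}. T ! i) [0..<m] \<in> Tests \<Theta> A B"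
    and cond_test: "T \<in> Tests \<Theta> A B \<Longrightarrow> (\<forall>i<length T. S i \<in> Tests \<Theta> B C) \<Longrightarrow>
        concat (map (\<lambda>i. map (\<lambda>y. cmp \<Theta> y (T ! i)) (S i)) [0..<length T]) \<in> Tests \<Theta> A C"
    and idt_triv_nonzero: "idt \<Theta> (Isys \<Theta>) \<noteq> 0"
    and scalars: "Tr \<Theta> (Isys \<Theta>) (Isys \<Theta>) = {r *\<^sub>R idt \<Theta> (Isys \<Theta>) | r. 0 \<le> r \<and> r \<le> 1}"
    and scalar_test_sum: "T \<in> Tests \<Theta> (Isys \<Theta>) (Isys \<Theta>) \<Longrightarrow> sum_list T = idt \<Theta> (Isys \<Theta>)"
    and coin_test: "0 \<le> p \<Longrightarrow> p \<le> 1 \<Longrightarrow>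
        [p *\<^sub>R idt \<Theta> (Isys \<Theta>), (1 - p) *\<^sub>R idt \<Theta> (Isys \<Theta>)] \<in> Tests \<Theta> (Isys \<Theta>) (Isys \<Theta>)"
    and state_ext: "\<rho> \<in> Tr \<Theta> (Isys \<Theta>) A \<Longrightarrow> \<rho>' \<in> Tr \<Theta> (Isys \<Theta>) A \<Longrightarrow>
        (\<forall>a\<in>Tr \<Theta> A (Isys \<Theta>). pr \<Theta> a \<rho> = pr \<Theta> a \<rho>') \<Longrightarrow> \<rho> = \<rho>'"
    and causal: "\<exists>!a. [a] \<in> Tests \<Theta> A (Isys \<Theta>)"
    and det_eff_sc: "det_eff \<Theta> (sc \<Theta> A B) = tens \<Theta> (det_eff \<Theta> A) (det_eff \<Theta> B)"
    and local_discr: "\<rho> \<in> Tr \<Theta> (Isys \<Theta>) (sc \<Theta> A B) \<Longrightarrow> \<rho>' \<in> Tr \<Theta> (Isys \<Theta>) (sc \<Theta> A B) \<Longrightarrow> \<rho> \<noteq> \<rho>' \<Longrightarrow>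
        \<exists>a\<in>Tr \<Theta> A (Isys \<Theta>). \<exists>b\<in>Tr \<Theta> B (Isys \<Theta>). pr \<Theta> (tens \<Theta> a b) \<rho> \<noteq> pr \<Theta> (tens \<Theta> a b) \<rho>'"
    and states_closed: "closed (Tr \<Theta> (Isys \<Theta>) A)"
    and distinguishable: "\<exists>A \<rho>1 \<rho>2 a1 a2. \<rho>1 \<in> Tr \<Theta> (Isys \<Theta>) A \<and> \<rho>2 \<in> Tr \<Theta> (Isys \<Theta>) A \<and>
        [a1, a2] \<in> Tests \<Theta> A (Isys \<Theta>) \<and>
        pr \<Theta> a1 \<rho>1 = 1 \<and> pr \<Theta> a2 \<rho>2 = 1 \<and> pr \<Theta> a1 \<rho>2 = 0 \<and> pr \<Theta> a2 \<rho>1 = 0"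

lemma OPT_opt_frame: "OPT \<Theta> \<Longrightarrow> opt_frame \<Theta>"
  unfolding OPT_def Let_def by unfold_locales simp_all

context opt_frame
begin

abbreviation "triv \<equiv> Isys \<Theta>"
abbreviation "sysc \<equiv> sc \<Theta>"
abbreviation "Trf \<equiv> Tr \<Theta>"
abbreviation "Tst \<equiv> Tests \<Theta>"
abbreviation "after \<equiv> cmp \<Theta>"
abbreviation "tensor \<equiv> tens \<Theta>"
abbreviation "ident \<equiv> idt \<Theta>"
abbreviation "deff \<equiv> det_eff \<Theta>"
abbreviation "prob \<equiv> pr \<Theta>"

lemma linear_after_r: "linear (after x)" using cmp_bilinear unfolding bilinear_def by blast
lemma linear_after_l: "linear (\<lambda>x. after x y)" using cmp_bilinear unfolding bilinear_def by blast
lemma linear_tensor_r: "linear (tensor x)" using tens_bilinear unfolding bilinear_def by blast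
lemma linear_tensor_l: "linear (\<lambda>x. tensor x y)" using tens_bilinear unfolding bilinear_def by blast

lemma after_add_r: "after x (y + z) = after x y + after x z" using linear_add[OF linear_after_r] .
lemma after_add_l: "after (x + y) z = after x z + after y z" using linear_add[OF linear_after_l] .
lemma after_scale_r: "after x (r *\<^sub>R y) = r *\<^sub>R after x y" using linear_cmul[OF linear_after_r] .
lemma after_scale_l: "after (r *\<^sub>R x) y = r *\<^sub>R after x y" using linear_cmul[OF linear_after_l] .
lemma after_sum_r: "after x (sum f S) = (\<Sum>i\<in>S. after x (f i))" using linear_sum[OF linear_after_r] .
lemma after_sum_l: "after (sum f S) y = (\<Sum>i\<in>S. after (f i) y)" using linear_sum[OF linear_after_l] .
lemma after_zero_r: "after x 0 = 0" using linear_0[OF linear_after_r] .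
lemma tensor_scale_r: "tensor x (r *\<^sub>R y) = r *\<^sub>R tensor x y" using linear_cmul[OF linear_tensor_r] .

lemma after_sum_list_l: "after (sum_list xs) y = sum_list (map (\<lambda>x. after x y) xs)"
  by (induction xs) (auto simp: after_add_l linear_0[OF linear_after_l])
lemma after_sum_mset_r: "after y (sum_mset M) = sum_mset (image_mset (\<lambda>x. after y x) M)"
  by (induction M) (auto simp: after_add_r after_zero_r)
lemma tensor_sum_list_l: "tensor (sum_list xs) y = sum_list (map (\<lambda>x. tensor x y) xs)"
  by (induction xs) (auto simp: linear_add[OF linear_tensor_l] linear_0[OF linear_tensor_l])
lemma tensor_sum_list_r: "tensor y (sum_list xs) = sum_list (map (\<lambda>x. tensor y x) xs)"
  by (induction xs) (auto simp: linear_add[OF linear_tensor_r] linear_0[OF linear_tensor_r])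

lemma sum_after: "(\<Sum>i<length T. after (T ! i) \<sigma>) = after (sum_list T) \<sigma>"
  by (simp add: sum_list_sum_nth atLeast0LessThan after_sum_l)

lemma states_eq_local:
  "\<rho> \<in> Trf triv (sysc A B) \<Longrightarrow> \<rho>' \<in> Trf triv (sysc A B) \<Longrightarrow>
   (\<forall>a\<in>Trf A triv. \<forall>b\<in>Trf B triv. prob (tensor a b) \<rho> = prob (tensor a b) \<rho>') \<Longrightarrow> \<rho> = \<rho>'"
  using local_discr by blast

lemma det_eff_test: "[deff A] \<in> Tst A triv"
  unfolding det_eff_def using causal by (rule theI')

lemma det_eff_unique: "[a] \<in> Tst A triv \<Longrightarrow> a = deff A"
  using causal[of A] det_eff_test[of A] by blast

lemma det_eff_Tr [simp]: "deff A \<in> Trf A triv"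
  using test_Tr[OF det_eff_test[of A]] by simp

text \<open>Coarse-graining all outcomes of a test gives a one-outcome test; for
  observation tests this is the deterministic effect (causality).\<close>

lemma full_coarse_graining: assumes "T \<in> Tst A B" shows "[sum_list T] \<in> Tst A B"
proof -
  have "(\<lambda>i. 0::nat) ` {..<length T} = {..<1}" using test_Tr[OF assms] by auto
  from coarse_test[OF assms this]
  have "map (\<lambda>j. \<Sum>i\<in>{i. i < length T \<and> (0::nat) = j}. T ! i) [0..<1] \<in> Tst A B" .
  moreover have "map (\<lambda>j. \<Sum>i\<in>{i. i < length T \<and> (0::nat) = j}. T ! i) [0..<1] = [sum_list T]"
    by (simp add: sum_list_sum_nth atLeast0LessThan lessThan_def)
  ultimately show ?thesis by simp
qed

lemma test_sum_Tr: "T \<in> Tst A B \<Longrightarrow> sum_list T \<in> Trf A B"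
  using test_Tr[OF full_coarse_graining] by auto

lemma observation_test_sum: "T \<in> Tst A triv \<Longrightarrow> sum_list T = deff A"
  using det_eff_unique full_coarse_graining by blast

lemma det_eff_after_test: assumes "T \<in> Tst A A" shows "after (deff A) (sum_list T) = deff A"
proof -
  have "concat (map (\<lambda>x. map (\<lambda>y. after y x) [deff A]) [sum_list T]) \<in> Tst A triv"
    by (rule seq_test[OF full_coarse_graining[OF assms] det_eff_test])
  then show ?thesis by (simp add: det_eff_unique)
qed

lemma scalar_cancel: "r *\<^sub>R ident triv = s *\<^sub>R ident triv \<Longrightarrow> r = s"
  using idt_triv_nonzero by (simp add: scaleR_cancel_right)

lemma prob_eqI: "after a \<rho> = r *\<^sub>R ident triv \<Longrightarrow> prob a \<rho> = r"
  unfolding pr_def by (rule the_equality) (auto dest: scalar_cancel simp: idt_triv_nonzero)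

lemma prob_scalar:
  assumes "a \<in> Trf A triv" "\<rho> \<in> Trf triv A"
  shows "after a \<rho> = prob a \<rho> *\<^sub>R ident triv" "0 \<le> prob a \<rho>" "prob a \<rho> \<le> 1"
proof -
  have "after a \<rho> \<in> Trf triv triv" using cmp_Tr[OF assms(2,1)] .
  then obtain r where r: "after a \<rho> = r *\<^sub>R ident triv" "0 \<le> r" "r \<le> 1" using scalars by blast
  moreover from r(1) have "prob a \<rho> = r" by (rule prob_eqI)
  ultimately show "after a \<rho> = prob a \<rho> *\<^sub>R ident triv" "0 \<le> prob a \<rho>" "prob a \<rho> \<le> 1" by auto
qed

lemma prob_zero: "prob a 0 = 0"
  by (rule prob_eqI) (simp add: after_zero_r)

lemma preparation_test_prob_sum:
  assumes "T \<in> Tst triv B" shows "(\<Sum>i<length T. prob (deff B) (T ! i)) = 1"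
proof -
  have T_Tr: "\<And>i. i < length T \<Longrightarrow> T ! i \<in> Trf triv B" using test_Tr[OF assms] by auto
  have "concat (map (\<lambda>x. map (\<lambda>y. after y x) [deff B]) T) \<in> Tst triv triv"
    using seq_test[OF assms det_eff_test] by simp
  moreover have "concat (map (\<lambda>x. map (\<lambda>y. after y x) [deff B]) T) = map (after (deff B)) T"
    by (induction T) auto
  ultimately have "ident triv = sum_list (map (after (deff B)) T)"
    by (simp add: scalar_test_sum)
  also have "\<dots> = (\<Sum>i<length T. after (deff B) (T ! i))"
    by (simp add: sum_list_sum_nth atLeast0LessThan)
  also have "\<dots> = (\<Sum>i<length T. prob (deff B) (T ! i)) *\<^sub>R ident triv"
    using T_Tr prob_scalar(1)[OF det_eff_Tr] by (simp add: scaleR_sum_left)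
  finally have "1 *\<^sub>R ident triv = (\<Sum>i<length T. prob (deff B) (T ! i)) *\<^sub>R ident triv" by simp
  then show ?thesis using scalar_cancel by metis
qed

text \<open>Every effect is dominated by the deterministic effect: it is an outcome
  of an observation test, whose outcomes sum to the deterministic effect.\<close>

lemma prob_le_det_eff:
  assumes "a \<in> Trf A triv" "\<sigma> \<in> Trf triv A" shows "prob a \<sigma> \<le> prob (deff A) \<sigma>"
proof -
  obtain W where W: "W \<in> Tst A triv" "a \<in> set W" using Tr_in_test[OF assms(1)] by blast
  have W_Tr: "set W \<subseteq> Trf A triv" using test_Tr[OF W(1)] by blast
  have "after (deff A) \<sigma> = sum_list (map (\<lambda>w. after w \<sigma>) W)"
    using observation_test_sum[OF W(1)] after_sum_list_l by metis
  also have "\<dots> = sum_list (map (\<lambda>w. prob w \<sigma> *\<^sub>R ident triv) W)"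
    using W_Tr prob_scalar(1)[OF _ assms(2)] by (intro arg_cong[where f=sum_list] map_cong) auto
  also have "\<dots> = sum_list (map (\<lambda>w. prob w \<sigma>) W) *\<^sub>R ident triv"
    by (induction W) (auto simp: scaleR_left_distrib)
  finally have "prob (deff A) \<sigma> = sum_list (map (\<lambda>w. prob w \<sigma>) W)" by (rule prob_eqI)
  moreover have "prob a \<sigma> \<le> sum_list (map (\<lambda>w. prob w \<sigma>) W)"
    using W W_Tr prob_scalar(2)[OF _ assms(2)] by (intro member_le_sum_list) auto
  ultimately show ?thesis by simp
qed

lemma zero_state_Tr: assumes "\<sigma> \<in> Trf triv A" shows "0 \<in> Trf triv A"
proof -
  have "(0::real) *\<^sub>R ident triv \<in> Trf triv triv" using scalars by auto
  then have "after \<sigma> (0 *\<^sub>R ident triv) \<in> Trf triv A" using cmp_Tr assms by blast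
  then show ?thesis by (simp add: after_scale_r after_zero_r)
qed

text \<open>A state of zero norm (probability of the deterministic effect) is zero,
  since all effects then give it probability zero.\<close>

lemma state_zero_if_norm_zero:
  assumes "\<sigma> \<in> Trf triv A" "prob (deff A) \<sigma> = 0" shows "\<sigma> = 0"
proof (rule state_ext[OF assms(1) zero_state_Tr[OF assms(1)]], intro ballI)
  fix a assume a: "a \<in> Trf A triv"
  have "prob a \<sigma> = 0"
    using prob_le_det_eff[OF a assms(1)] prob_scalar(2)[OF a assms(1)] assms(2) by simp
  then show "prob a \<sigma> = prob a 0" by (simp add: prob_zero)
qed

lemma norm_pos: "\<sigma> \<in> Trf triv A \<Longrightarrow> \<sigma> \<noteq> 0 \<Longrightarrow> 0 < prob (deff A) \<sigma>"
  using prob_scalar(2)[OF det_eff_Tr] state_zero_if_norm_zero by force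

text \<open>Refinement via sub-multisets.  A refinement D of C picks outcomes of a test
  summing to C; up to reordering of the test they form a prefix, which can be
  coarse-grained into a single outcome.\<close>

lemma prefix_coarse_test: assumes "L1 @ L2 \<in> Tst A B" "L1 \<noteq> []"
  shows "\<exists>T'\<in>Tst A B. sum_list L1 \<in> set T'"
proof (cases "L2 = []")
  case True then show ?thesis using full_coarse_graining[OF assms(1)] by (metis append_Nil2 list.set_intros(1))
next
  case False
  define f where "f = (\<lambda>i::nat. if i < length L1 then 0 else (1::nat))"
  have img: "f ` {..<length (L1 @ L2)} = {..<2}"
  proof
    show "f ` {..<length (L1 @ L2)} \<subseteq> {..<2}" unfolding f_def by auto
    have "0 \<in> f ` {..<length (L1 @ L2)}" using assms(2) unfolding f_def
      by (intro image_eqI[of _ _ 0]) auto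
    moreover have "1 \<in> f ` {..<length (L1 @ L2)}" using False unfolding f_def
      by (intro image_eqI[of _ _ "length L1"]) auto
    ultimately show "{..<2} \<subseteq> f ` {..<length (L1 @ L2)}" by (auto simp: less_2_cases_iff)
  qed
  have "map (\<lambda>j. \<Sum>i\<in>{i. i < length (L1 @ L2) \<and> f i = j}. (L1 @ L2) ! i) [0..<2] \<in> Tst A B"
    by (rule coarse_test[OF assms(1) img])
  moreover have "{i. i < length (L1 @ L2) \<and> f i = 0} = {..<length L1}" unfolding f_def by auto
  then have "(\<Sum>i\<in>{i. i < length (L1 @ L2) \<and> f i = 0}. (L1 @ L2) ! i) = sum_list L1"
    by (simp add: sum_list_sum_nth atLeast0LessThan nth_append)
  ultimately show ?thesis by (intro bexI[of _ "map (\<lambda>j. \<Sum>i\<in>{i. i < length (L1 @ L2) \<and> f i = j}. (L1 @ L2) ! i) [0..<2]"]) (auto simp: upt_conv_Cons)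
qed

lemma test_split: assumes "T \<in> Tst A B" "M \<subseteq># mset T"
  obtains xs ys where "xs @ ys \<in> Tst A B" "mset xs = M"
proof -
  obtain xs where xs: "mset xs = M" using ex_mset by blast
  obtain ys where ys: "mset ys = mset T - M" using ex_mset by blast
  have "mset (xs @ ys) = mset T" using xs ys assms(2) by (simp add: subset_mset.add_diff_inverse)
  then have "xs @ ys \<in> Tst A B" using perm_test[OF assms(1)] by blast
  then show ?thesis using that xs by blast
qed

lemma sub_multiset_coarse_test: assumes "T \<in> Tst A B" "M \<subseteq># mset T" "M \<noteq> {#}"
  shows "\<exists>T'\<in>Tst A B. sum_mset M \<in> set T'"
proof -
  obtain xs ys where "xs @ ys \<in> Tst A B" "mset xs = M" using test_split[OF assms(1,2)] by blast
  moreover then have "xs \<noteq> []" using assms(3) by auto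
  ultimately show ?thesis using prefix_coarse_test by (metis sum_mset_sum_list)
qed

lemma sub_multiset_sum_Tr: "T \<in> Tst A B \<Longrightarrow> M \<subseteq># mset T \<Longrightarrow> M \<noteq> {#} \<Longrightarrow> sum_mset M \<in> Trf A B"
  using sub_multiset_coarse_test test_Tr by blast

lemma refines_mset: "refines \<Theta> A B D C \<longleftrightarrow>
   (\<exists>T\<in>Tst A B. \<exists>M. M \<subseteq># mset T \<and> D \<in># M \<and> C = sum_mset M)"
proof
  assume "refines \<Theta> A B D C"
  then obtain T Y0 where T: "T \<in> Tst A B" "Y0 \<subseteq> {..<length T}" "C = (\<Sum>j\<in>Y0. T ! j)"
    "D \<in> (\<lambda>j. T ! j) ` Y0" unfolding refines_def by blast
  define M where "M = image_mset (\<lambda>j. T ! j) (mset_set Y0)"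
  have fin: "finite Y0" using T(2) finite_subset by blast
  have "mset T = image_mset (\<lambda>j. T ! j) (mset_set {..<length T})"
    by (metis map_nth mset_map mset_upt atLeast0LessThan)
  moreover have "mset_set Y0 \<subseteq># mset_set {..<length T}"
    using T(2) by (simp add: subset_imp_msubset_mset_set)
  ultimately have "M \<subseteq># mset T" unfolding M_def by (simp add: image_mset_subseteq_mono)
  moreover have "D \<in># M" using T(4) fin unfolding M_def by auto
  moreover have "C = sum_mset M" using T(3) unfolding M_def by (simp add: sum_unfold_sum_mset)
  ultimately show "\<exists>T\<in>Tst A B. \<exists>M. M \<subseteq># mset T \<and> D \<in># M \<and> C = sum_mset M" using T(1) by blast
next
  assume "\<exists>T\<in>Tst A B. \<exists>M. M \<subseteq># mset T \<and> D \<in># M \<and> C = sum_mset M"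
  then obtain T M where T: "T \<in> Tst A B" "M \<subseteq># mset T" "D \<in># M" "C = sum_mset M" by blast
  obtain xs ys where xy: "xs @ ys \<in> Tst A B" "mset xs = M" using test_split[OF T(1,2)] by blast
  have "{..<length xs} \<subseteq> {..<length (xs @ ys)}" by auto
  moreover have "C = (\<Sum>j\<in>{..<length xs}. (xs @ ys) ! j)"
  proof -
    have "C = sum_list xs" using T(4) xy(2) by (metis sum_mset_sum_list)
    also have "\<dots> = (\<Sum>j\<in>{..<length xs}. xs ! j)" by (simp add: sum_list_sum_nth atLeast0LessThan)
    also have "\<dots> = (\<Sum>j\<in>{..<length xs}. (xs @ ys) ! j)" by (rule sum.cong) (auto simp: nth_append)
    finally show ?thesis .
  qed
  moreover have "D \<in> (\<lambda>j. (xs @ ys) ! j) ` {..<length xs}"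
    using T(3) xy(2) by (auto simp: in_set_conv_nth nth_append image_iff)
  ultimately show "refines \<Theta> A B D C" unfolding refines_def using xy(1) by blast
qed

lemma refines_refl: assumes "\<rho> \<in> Trf triv A" shows "refines \<Theta> triv A \<rho> \<rho>"
proof -
  obtain T where "T \<in> Tst triv A" "\<rho> \<in> set T" using Tr_in_test[OF assms] by blast
  then show ?thesis unfolding refines_mset
    by (intro bexI[of _ T] exI[of _ "{#\<rho>#}"]) auto
qed

lemma refines_Tr: "refines \<Theta> A B D C \<Longrightarrow> D \<in> Trf A B"
proof -
  assume "refines \<Theta> A B D C"
  then obtain T M where "T \<in> Tst A B" "M \<subseteq># mset T" "D \<in># M" unfolding refines_mset by blast
  then have "D \<in> set T" by (metis mset_subset_eqD set_mset_mset)
  then show ?thesis using test_Tr[OF \<open>T \<in> Tst A B\<close>] by blast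
qed

text \<open>Refinement is compatible with scaling by a probability: condition the
  test on the outcome of a coin toss.\<close>

lemma refines_scaleR: assumes "refines \<Theta> triv A \<xi> Y" "0 \<le> c" "c \<le> 1"
  shows "refines \<Theta> triv A (c *\<^sub>R \<xi>) (c *\<^sub>R Y)"
proof -
  obtain T M where T: "T \<in> Tst triv A" "M \<subseteq># mset T" "\<xi> \<in># M" "Y = sum_mset M"
    using assms(1) unfolding refines_mset by blast
  define P where "P = [c *\<^sub>R ident triv, (1 - c) *\<^sub>R ident triv]"
  have P: "P \<in> Tst triv triv" unfolding P_def by (rule coin_test[OF assms(2,3)])
  define L where "L = concat (map (\<lambda>i. map (\<lambda>y. after y (P ! i)) T) [0..<length P])"
  have L: "L \<in> Tst triv A" unfolding L_def by (rule cond_test[OF P]) (use T(1) in simp)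
  have blk: "mset (map (\<lambda>y. after y (P ! 0)) T) \<subseteq># mset L"
    unfolding L_def by (rule mset_concat_block[where F="\<lambda>i. map (\<lambda>y. after y (P ! i)) T"]) (simp add: P_def)
  have TT: "set T \<subseteq> Trf triv A" using test_Tr[OF T(1)] by blast
  have "image_mset (\<lambda>y. c *\<^sub>R y) (mset T) = image_mset (\<lambda>y. after y (P ! 0)) (mset T)"
    using TT by (intro image_mset_cong) (auto simp: P_def after_scale_r cmp_idt)
  then have "image_mset (\<lambda>y. c *\<^sub>R y) (mset T) \<subseteq># mset L" using blk by simp
  moreover have "image_mset (\<lambda>y. c *\<^sub>R y) M \<subseteq># image_mset (\<lambda>y. c *\<^sub>R y) (mset T)"
    using T(2) by (rule image_mset_subseteq_mono)
  ultimately have "image_mset (\<lambda>y. c *\<^sub>R y) M \<subseteq># mset L" by (rule subset_mset.trans[rotated])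
  moreover have "c *\<^sub>R \<xi> \<in># image_mset (\<lambda>y. c *\<^sub>R y) M" using T(3) by (simp add: image_iff) blast
  moreover have "c *\<^sub>R Y = sum_mset (image_mset (\<lambda>y. c *\<^sub>R y) M)" using T(4) by (simp add: scaleR_sum_mset)
  ultimately show ?thesis unfolding refines_mset using L by blast
qed

text \<open>Only the zero state refines the zero state, as probabilities are nonnegative.\<close>

lemma refines_zero: assumes "refines \<Theta> triv A \<sigma> 0" shows "\<sigma> = 0"
proof -
  obtain T M where T: "T \<in> Tst triv A" "M \<subseteq># mset T" "\<sigma> \<in># M" "0 = sum_mset M"
    using assms unfolding refines_mset by blast
  have MT: "x \<in> Trf triv A" if "x \<in># M" for x
  proof -
    have "x \<in> set T" using that T(2) by (metis mset_subset_eqD set_mset_mset)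
    then show ?thesis using test_Tr[OF T(1)] by blast
  qed
  have "0 = after (deff A) (sum_mset M)" using T(4) by (simp add: after_zero_r)
  also have "\<dots> = sum_mset (image_mset (\<lambda>x. after (deff A) x) M)" by (rule after_sum_mset_r)
  also have "\<dots> = sum_mset (image_mset (\<lambda>x. prob (deff A) x *\<^sub>R ident triv) M)"
    using MT prob_scalar(1)[OF det_eff_Tr] by (intro arg_cong[where f=sum_mset] image_mset_cong) auto
  also have "\<dots> = sum_mset (image_mset (\<lambda>x. prob (deff A) x) M) *\<^sub>R ident triv" by (rule sum_mset_scaleR_left)
  finally have "0 *\<^sub>R ident triv = sum_mset (image_mset (\<lambda>x. prob (deff A) x) M) *\<^sub>R ident triv" by simp
  then have s0: "sum_mset (image_mset (\<lambda>x. prob (deff A) x) M) = 0" using scalar_cancel by metis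
  have "sum_mset (image_mset (\<lambda>x. prob (deff A) x) M) = prob (deff A) \<sigma> + sum_mset (image_mset (\<lambda>x. prob (deff A) x) (M - {#\<sigma>#}))"
    using T(3) by (metis image_mset_add_mset insert_DiffM sum_mset.insert)
  moreover have "0 \<le> sum_mset (image_mset (\<lambda>x. prob (deff A) x) (M - {#\<sigma>#}))"
    using MT prob_scalar(2)[OF det_eff_Tr] by (intro sum_mset_nonneg_real) (meson in_diffD)
  moreover have "0 \<le> prob (deff A) \<sigma>" using MT[OF T(3)] prob_scalar(2)[OF det_eff_Tr] by blast
  ultimately have "prob (deff A) \<sigma> = 0" using s0 by linarith
  then show ?thesis using state_zero_if_norm_zero MT[OF T(3)] by blast
qed



text \<open>Repeat-until-success.  If X and Y are states, so is X + (1 - |X|) Y, where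
  |X| is the norm of X: run a test containing X; on outcome X stop, on any
  other outcome discard the system and prepare Y.\<close>

lemma repeat_until_success: assumes X: "X \<in> Trf triv B" and Y: "Y \<in> Trf triv B"
  shows "X + (1 - prob (deff B) X) *\<^sub>R Y \<in> Trf triv B"
proof -
  obtain S where S: "S \<in> Tst triv B" "Y \<in> set S" using Tr_in_test[OF Y] by blast
  obtain T0 where T0: "T0 \<in> Tst triv B" "X \<in> set T0" using Tr_in_test[OF X] by blast
  obtain k0 where k0: "k0 < length T0" "T0 ! k0 = X" using T0(2) by (auto simp: in_set_conv_nth)
  have TT: "\<And>i. i < length T0 \<Longrightarrow> T0 ! i \<in> Trf triv B" using test_Tr[OF T0(1)] by auto
  define Sc where "Sc = (\<lambda>k. if k = k0 then [ident B] else map (\<lambda>y. after y (deff B)) S)"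
  have seS: "map (\<lambda>y. after y (deff B)) S \<in> Tst B B"
    using seq_test[OF det_eff_test S(1)] by simp
  have Sc: "\<forall>i<length T0. Sc i \<in> Tst B B" unfolding Sc_def using seS idt_test by auto
  define L where "L = concat (map (\<lambda>i. map (\<lambda>y. after y (T0 ! i)) (Sc i)) [0..<length T0])"
  have L: "L \<in> Tst triv B" unfolding L_def by (rule cond_test[OF T0(1) Sc])
  define h where "h = (\<lambda>i. if i = k0 then after (ident B) (T0 ! k0) else after (after Y (deff B)) (T0 ! i))"
  define M where "M = image_mset h (mset_set {..<length T0})"
  have "M \<subseteq># mset L" unfolding M_def L_def
    by (rule mset_concat_choice) (auto simp: h_def Sc_def S(2))
  moreover have "h k0 \<in># M" unfolding M_def using k0(1) by simp
  then have "M \<noteq> {#}" by auto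
  ultimately have inTr: "sum_mset M \<in> Trf triv B" by (rule sub_multiset_sum_Tr[OF L])
  have hi: "h i = prob (deff B) (T0 ! i) *\<^sub>R Y" if "i < length T0" "i \<noteq> k0" for i
  proof -
    have "h i = after Y (after (deff B) (T0 ! i))" unfolding h_def using that cmp_assoc[OF TT[OF that(1)] det_eff_Tr Y] by simp
    also have "\<dots> = prob (deff B) (T0 ! i) *\<^sub>R Y"
      using prob_scalar(1)[OF det_eff_Tr TT[OF that(1)]] cmp_idt(1)[OF Y] by (simp add: after_scale_r)
    finally show ?thesis .
  qed
  have fin: "finite {..<length T0}" by simp
  have "sum_mset M = (\<Sum>i<length T0. h i)" unfolding M_def by (simp add: sum_unfold_sum_mset)
  also have "\<dots> = h k0 + (\<Sum>i\<in>{..<length T0} - {k0}. h i)"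
    using k0(1) by (simp add: sum.remove)
  also have "(\<Sum>i\<in>{..<length T0} - {k0}. h i) = (\<Sum>i\<in>{..<length T0} - {k0}. prob (deff B) (T0 ! i)) *\<^sub>R Y"
    using hi by (simp add: scaleR_sum_left)
  also have "(\<Sum>i\<in>{..<length T0} - {k0}. prob (deff B) (T0 ! i)) = 1 - prob (deff B) X"
    using preparation_test_prob_sum[OF T0(1)] k0 sum.remove[OF fin, of k0 "\<lambda>i. prob (deff B) (T0 ! i)"] by simp
  also have "h k0 = X" unfolding h_def using k0 cmp_idt(2)[OF X] by simp
  finally show ?thesis using inTr by simp
qed

lemma geometric_partial_sums_Tr: assumes X: "X \<in> Trf triv B"
  shows "(\<Sum>k<n. (1 - prob (deff B) X) ^ k) *\<^sub>R X \<in> Trf triv B"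
proof (induction n)
  case 0 then show ?case using zero_state_Tr[OF X] by simp
next
  case (Suc n)
  let ?q = "1 - prob (deff B) X"
  have "X + ?q *\<^sub>R ((\<Sum>k<n. ?q ^ k) *\<^sub>R X) \<in> Trf triv B" by (rule repeat_until_success[OF X Suc])
  moreover have "X + ?q *\<^sub>R ((\<Sum>k<n. ?q ^ k) *\<^sub>R X) = (\<Sum>k<Suc n. ?q ^ k) *\<^sub>R X"
  proof -
    have "(\<Sum>k<Suc n. ?q ^ k) = 1 + ?q * (\<Sum>k<n. ?q ^ k)"
      by (subst sum.lessThan_Suc_shift) (simp add: sum_distrib_left del: sum.lessThan_Suc)
    then show ?thesis by (simp add: scaleR_left_distrib)
  qed
  ultimately show ?case by simp
qed

text \<open>Every nonzero state can be normalised: X / |X| is the limit of the states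
  above, and the state space is closed.\<close>

lemma normalize_state: assumes X: "X \<in> Trf triv B" and pos: "0 < prob (deff B) X"
  shows "(1 / prob (deff B) X) *\<^sub>R X \<in> Trf triv B" "prob (deff B) ((1 / prob (deff B) X) *\<^sub>R X) = 1"
proof -
  let ?l = "prob (deff B) X"
  let ?q = "1 - ?l"
  have le1: "?l \<le> 1" using prob_scalar(3)[OF det_eff_Tr X] .
  have "norm ?q < 1" using pos le1 by simp
  then have "(\<lambda>k. ?q ^ k) sums (1 / (1 - ?q))" by (rule geometric_sums)
  then have "(\<lambda>n. \<Sum>k<n. ?q ^ k) \<longlonglongrightarrow> 1 / ?l" unfolding sums_def by simp
  then have lim: "(\<lambda>n. (\<Sum>k<n. ?q ^ k) *\<^sub>R X) \<longlonglongrightarrow> (1 / ?l) *\<^sub>R X"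
    by (intro tendsto_scaleR tendsto_const)
  show "(1 / ?l) *\<^sub>R X \<in> Trf triv B"
    by (rule closed_sequentially[OF states_closed, where f="\<lambda>n. (\<Sum>k<n. ?q ^ k) *\<^sub>R X"])
       (rule geometric_partial_sums_Tr[OF X], rule lim)
  have "after (deff B) ((1 / ?l) *\<^sub>R X) = 1 *\<^sub>R ident triv"
    using prob_scalar(1)[OF det_eff_Tr X] pos by (simp add: after_scale_r)
  then show "prob (deff B) ((1 / ?l) *\<^sub>R X) = 1" by (rule prob_eqI)
qed



lemma tensor_factor: assumes "x \<in> Trf X Y" "b \<in> Trf B triv" shows "tensor x b = after x (tensor (ident X) b)"
proof -
  have "tensor (after x (ident X)) (after (ident triv) b) = after (tensor x (ident triv)) (tensor (ident X) b)"
    by (rule interchange[OF idt_Tr assms(1) assms(2) idt_Tr])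
  then show ?thesis using cmp_idt[OF assms(1)] cmp_idt[OF assms(2)] tens_unit[OF assms(1)] by simp
qed

lemma idt_tensor_effect_Tr: "b \<in> Trf F triv \<Longrightarrow> tensor (ident X) b \<in> Trf (sysc X F) X"
  using tens_Tr[OF idt_Tr, of b F triv X] by simp

lemma product_effect_after: assumes "a \<in> Trf A triv" "b \<in> Trf F triv" "Z \<in> Trf triv (sysc A F)"
  shows "after (tensor a b) Z = after a (after (tensor (ident A) b) Z)"
  using tensor_factor[OF assms(1,2)] cmp_assoc[OF assms(3) idt_tensor_effect_Tr[OF assms(2)] assms(1)] by simp

lemma local_ops_commute: assumes "x \<in> Trf A A'" "d \<in> Trf F triv" "Z \<in> Trf triv (sysc A F)"
  shows "after (tensor (ident A') d) (after (tensor x (ident F)) Z) = after x (after (tensor (ident A) d) Z)"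
proof -
  have "tensor (after (ident A') x) (after d (ident F)) = after (tensor (ident A') d) (tensor x (ident F))"
    by (rule interchange[OF assms(1) idt_Tr idt_Tr assms(2)])
  then have 1: "after (tensor (ident A') d) (tensor x (ident F)) = tensor x d" using cmp_idt[OF assms(1)] cmp_idt[OF assms(2)] by simp
  have xF: "tensor x (ident F) \<in> Trf (sysc A F) (sysc A' F)" using tens_Tr[OF assms(1) idt_Tr] .
  have "after (tensor (ident A') d) (after (tensor x (ident F)) Z) = after (after (tensor (ident A') d) (tensor x (ident F))) Z"
    using cmp_assoc[OF assms(3) xF idt_tensor_effect_Tr[OF assms(2)]] by simp
  also have "\<dots> = after (tensor x d) Z" using 1 by simp
  also have "\<dots> = after (after x (tensor (ident A) d)) Z" using tensor_factor[OF assms(1,2)] by simp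
  also have "\<dots> = after x (after (tensor (ident A) d) Z)" using cmp_assoc[OF assms(3) idt_tensor_effect_Tr[OF assms(2)] assms(1)] .
  finally show ?thesis .
qed

lemma idt_tensor_state_Tr: "\<alpha> \<in> Trf triv C \<Longrightarrow> tensor (ident A) \<alpha> \<in> Trf A (sysc A C)"
  using tens_Tr[OF idt_Tr, of \<alpha> triv C A] by simp

lemma ancilla_readout: assumes "s \<in> Trf triv A" "\<alpha> \<in> Trf triv C" "a \<in> Trf C triv"
  shows "after (tensor (ident A) a) (after (tensor (ident A) \<alpha>) s) = prob a \<alpha> *\<^sub>R s"
proof -
  have "tensor (after (ident A) (ident A)) (after a \<alpha>) = after (tensor (ident A) a) (tensor (ident A) \<alpha>)"
    by (rule interchange[OF idt_Tr idt_Tr assms(2) assms(3)])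
  then have "after (tensor (ident A) a) (tensor (ident A) \<alpha>) = prob a \<alpha> *\<^sub>R ident A"
    using prob_scalar(1)[OF assms(3,2)] cmp_idt(1)[OF idt_Tr] tens_idt[of A triv]
    by (simp add: tensor_scale_r)
  moreover have "after (tensor (ident A) a) (after (tensor (ident A) \<alpha>) s) = after (after (tensor (ident A) a) (tensor (ident A) \<alpha>)) s"
    using cmp_assoc[OF assms(1) idt_tensor_state_Tr[OF assms(2)] idt_tensor_effect_Tr[OF assms(3)]] by simp
  ultimately show ?thesis using cmp_idt(2)[OF assms(1)] by (simp add: after_scale_l)
qed

lemma marginal_readout: assumes "\<Psi> \<in> Trf triv (sysc (sysc A C) B)" "a \<in> Trf C triv"
  shows "after (tensor (ident A) (tensor a (deff B))) \<Psi> = after (tensor (ident A) a) (marg \<Theta> (sysc A C) B \<Psi>)"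
proof -
  have x2: "tensor (ident A) a \<in> Trf (sysc A C) A" by (rule idt_tensor_effect_Tr[OF assms(2)])
  have "tensor (ident A) (tensor a (deff B)) = tensor (tensor (ident A) a) (deff B)"
    using tens_assoc[OF idt_Tr assms(2) det_eff_Tr] by simp
  also have "\<dots> = after (tensor (ident A) a) (tensor (ident (sysc A C)) (deff B))"
    by (rule tensor_factor[OF x2 det_eff_Tr])
  finally have "after (tensor (ident A) (tensor a (deff B))) \<Psi> = after (after (tensor (ident A) a) (tensor (ident (sysc A C)) (deff B))) \<Psi>"
    by simp
  also have "\<dots> = after (tensor (ident A) a) (after (tensor (ident (sysc A C)) (deff B)) \<Psi>)"
    by (rule cmp_assoc[OF assms(1) idt_tensor_effect_Tr[OF det_eff_Tr] x2])
  finally show ?thesis unfolding marg_def .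
qed

text \<open>Applying any effect to the ancilla of a bipartite state yields a refinement
  of its marginal: it is an outcome of an observation test on the ancilla.\<close>

lemma refines_marginal: assumes "\<Psi> \<in> Trf triv (sysc A F)" "d \<in> Trf F triv"
  shows "refines \<Theta> triv A (after (tensor (ident A) d) \<Psi>) (after (tensor (ident A) (deff F)) \<Psi>)"
proof -
  obtain P where P: "P \<in> Tst triv (sysc A F)" "\<Psi> \<in> set P" using Tr_in_test[OF assms(1)] by blast
  obtain W where W: "W \<in> Tst F triv" "d \<in> set W" using Tr_in_test[OF assms(2)] by blast
  define Q where "Q = map (tensor (ident A)) W"
  have "concat (map (\<lambda>x. map (\<lambda>y. tensor x y) W) [ident A]) \<in> Tst (sysc A F) (sysc A triv)"
    by (rule par_test[OF idt_test W(1)])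
  then have Q: "Q \<in> Tst (sysc A F) A" unfolding Q_def by simp
  define L where "L = concat (map (\<lambda>x. map (\<lambda>y. after y x) Q) P)"
  have L: "L \<in> Tst triv A" unfolding L_def by (rule seq_test[OF P(1) Q])
  have "mset (map (\<lambda>y. after y \<Psi>) Q) \<subseteq># mset L" unfolding L_def
    by (rule mset_concat_block[OF P(2)])
  moreover have "after (tensor (ident A) d) \<Psi> \<in># mset (map (\<lambda>y. after y \<Psi>) Q)" using W(2) unfolding Q_def by simp
  moreover have "after (tensor (ident A) (deff F)) \<Psi> = sum_mset (mset (map (\<lambda>y. after y \<Psi>) Q))"
  proof -
    have "sum_list Q = tensor (ident A) (sum_list W)" unfolding Q_def by (simp add: tensor_sum_list_r)
    then have "sum_list (map (\<lambda>y. after y \<Psi>) Q) = after (tensor (ident A) (deff F)) \<Psi>"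
      using observation_test_sum[OF W(1)] by (simp add: after_sum_list_l[symmetric])
    then show ?thesis by (simp only: sum_mset_sum_list)
  qed
  ultimately show ?thesis unfolding refines_mset using L by blast
qed



text \<open>If the channel of a test T, acting on A alone, leaves a pure state Psi of AF
  unchanged, then each outcome of T multiplies Psi by a probability: the
  outcomes T_i (x) I refine Psi, which is atomic.\<close>

lemma pure_state_eigen: assumes "\<Psi> \<in> Trf triv (sysc A F)" "atomic \<Theta> triv (sysc A F) \<Psi>" "T \<in> Tst A A"
  "after (tensor (sum_list T) (ident F)) \<Psi> = \<Psi>" "i < length T"
  shows "\<exists>l. 0 \<le> l \<and> l \<le> 1 \<and> after (tensor (T ! i) (ident F)) \<Psi> = l *\<^sub>R \<Psi>"
proof -
  obtain P where P: "P \<in> Tst triv (sysc A F)" "\<Psi> \<in> set P" using Tr_in_test[OF assms(1)] by blast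
  define Q where "Q = map (\<lambda>x. tensor x (ident F)) T"
  have "concat (map (\<lambda>x. map (\<lambda>y. tensor x y) [ident F]) T) \<in> Tst (sysc A F) (sysc A F)"
    by (rule par_test[OF assms(3) idt_test])
  moreover have "concat (map (\<lambda>x. map (\<lambda>y. tensor x y) [ident F]) T) = Q" unfolding Q_def by (induction T) auto
  ultimately have Q: "Q \<in> Tst (sysc A F) (sysc A F)" by simp
  define L where "L = concat (map (\<lambda>x. map (\<lambda>y. after y x) Q) P)"
  have L: "L \<in> Tst triv (sysc A F)" unfolding L_def by (rule seq_test[OF P(1) Q])
  have "mset (map (\<lambda>y. after y \<Psi>) Q) \<subseteq># mset L" unfolding L_def
    by (rule mset_concat_block[OF P(2)])
  moreover have "after (tensor (T ! i) (ident F)) \<Psi> \<in># mset (map (\<lambda>y. after y \<Psi>) Q)" using assms(5) unfolding Q_def by simp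
  moreover have "\<Psi> = sum_mset (mset (map (\<lambda>y. after y \<Psi>) Q))"
  proof -
    have "sum_list Q = tensor (sum_list T) (ident F)" unfolding Q_def by (simp add: tensor_sum_list_l)
    then have "sum_list (map (\<lambda>y. after y \<Psi>) Q) = \<Psi>"
      using assms(4) by (simp add: after_sum_list_l[symmetric])
    then show ?thesis by (simp only: sum_mset_sum_list)
  qed
  ultimately have "refines \<Theta> triv (sysc A F) (after (tensor (T ! i) (ident F)) \<Psi>) \<Psi>"
    unfolding refines_mset using L by blast
  then show ?thesis using assms(2) unfolding atomic_def by blast
qed

text \<open>By local discriminability, X (x) I fixes Psi as soon as X fixes every state
  of A obtained from Psi by an effect on the ancilla F.\<close>

lemma fixed_by_local_action: assumes \<Psi>: "\<Psi> \<in> Trf triv (sysc A F)" and X: "X \<in> Trf A A"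
  and fixes_readouts: "\<And>d. d \<in> Trf F triv \<Longrightarrow> after X (after (tensor (ident A) d) \<Psi>) = after (tensor (ident A) d) \<Psi>"
  shows "after (tensor X (ident F)) \<Psi> = \<Psi>"
proof (rule states_eq_local)
  have XF: "tensor X (ident F) \<in> Trf (sysc A F) (sysc A F)" using tens_Tr[OF X idt_Tr] .
  show "after (tensor X (ident F)) \<Psi> \<in> Trf triv (sysc A F)" using cmp_Tr[OF \<Psi> XF] .
  show "\<Psi> \<in> Trf triv (sysc A F)" by (rule \<Psi>)
  show "\<forall>a\<in>Trf A triv. \<forall>b\<in>Trf F triv. prob (tensor a b) (after (tensor X (ident F)) \<Psi>) = prob (tensor a b) \<Psi>"
  proof (intro ballI)
    fix a b assume a: "a \<in> Trf A triv" and b: "b \<in> Trf F triv"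
    have "after (tensor a b) (after (tensor X (ident F)) \<Psi>) = after a (after (tensor (ident A) b) (after (tensor X (ident F)) \<Psi>))"
      by (rule product_effect_after[OF a b cmp_Tr[OF \<Psi> XF]])
    also have "\<dots> = after a (after X (after (tensor (ident A) b) \<Psi>))" using local_ops_commute[OF X b \<Psi>] by simp
    also have "\<dots> = after a (after (tensor (ident A) b) \<Psi>)" using fixes_readouts[OF b] by simp
    also have "\<dots> = after (tensor a b) \<Psi>" using product_effect_after[OF a b \<Psi>] by simp
    finally show "prob (tensor a b) (after (tensor X (ident F)) \<Psi>) = prob (tensor a b) \<Psi>" unfolding pr_def by simp
  qed
qed



lemma refinement_split:
  assumes "refines \<Theta> triv A \<sigma> \<rho>"
  obtains zs ys where "\<sigma> # zs @ ys \<in> Tst triv A" "\<rho> = \<sigma> + sum_list zs"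
    "sum_list zs \<in> Trf triv A"
proof -
  obtain T M where T: "T \<in> Tst triv A" "M \<subseteq># mset T" "\<sigma> \<in># M" "\<rho> = sum_mset M"
    using assms unfolding refines_mset by blast
  obtain zs where zs: "mset zs = M - {#\<sigma>#}" using ex_mset by blast
  obtain ys where ys: "mset ys = mset T - M" using ex_mset by blast
  have "mset (\<sigma> # zs @ ys) = add_mset \<sigma> (M - {#\<sigma>#}) + (mset T - M)" using zs ys by simp
  also have "\<dots> = mset T" using T(2,3) by (simp add: insert_DiffM subset_mset.add_diff_inverse)
  finally have L: "\<sigma> # zs @ ys \<in> Tst triv A" using perm_test[OF T(1)] by blast
  have "\<rho> = sum_mset (add_mset \<sigma> (M - {#\<sigma>#}))" using T(3,4) by (simp add: insert_DiffM)
  then have \<rho>: "\<rho> = \<sigma> + sum_list zs" using zs by (simp add: sum_mset_sum_list[symmetric])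
  have "sum_list zs \<in> Trf triv A"
  proof (cases "zs = []")
    case True
    have "\<sigma> \<in> Trf triv A" using test_Tr[OF L] by simp
    then show ?thesis using True zero_state_Tr by simp
  next
    case False
    have "mset zs \<subseteq># mset (\<sigma> # zs @ ys)" by simp
    with sub_multiset_sum_Tr[OF L] False have "sum_mset (mset zs) \<in> Trf triv A" by simp
    then show ?thesis by (simp add: sum_mset_sum_list)
  qed
  with L \<rho> show ?thesis using that by blast
qed

text \<open>It is
  prepared by conditioning, on each outcome of the test containing sigma and the
  summands of tau, a preparation of alpha1 or alpha2 on the ancilla.\<close>

lemma flag_state_Tr:
  assumes "refines \<Theta> triv A \<sigma> \<rho>" "\<alpha>1 \<in> Trf triv C" "\<alpha>2 \<in> Trf triv C"
  obtains \<tau> where "\<tau> \<in> Trf triv A" "\<rho> = \<sigma> + \<tau>"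
    "after (tensor (ident A) \<alpha>1) \<sigma> + after (tensor (ident A) \<alpha>2) \<tau> \<in> Trf triv (sysc A C)"
proof -
  obtain zs ys where Lst: "\<sigma> # zs @ ys \<in> Tst triv A" and \<rho>: "\<rho> = \<sigma> + sum_list zs"
    and \<tau>: "sum_list zs \<in> Trf triv A"
    using refinement_split[OF assms(1)] by blast
  define Lst where "Lst = \<sigma> # zs @ ys"
  obtain W1 where W1: "W1 \<in> Tst triv C" "\<alpha>1 \<in> set W1" using Tr_in_test[OF assms(2)] by blast
  obtain W2 where W2: "W2 \<in> Tst triv C" "\<alpha>2 \<in> set W2" using Tr_in_test[OF assms(3)] by blast
  have prep: "map (tensor (ident A)) W \<in> Tst A (sysc A C)" if "W \<in> Tst triv C" for W
    using par_test[OF idt_test that, of A] by simp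
  define Sc where "Sc = (\<lambda>i. if 0 < i \<and> i \<le> length zs then map (tensor (ident A)) W2
     else map (tensor (ident A)) W1)"
  have "\<forall>i<length Lst. Sc i \<in> Tst A (sysc A C)" unfolding Sc_def using prep W1 W2 by auto
  from cond_test[OF Lst[folded Lst_def] this]
  have L: "concat (map (\<lambda>i. map (\<lambda>y. after y (Lst ! i)) (Sc i)) [0..<length Lst]) \<in> Tst triv (sysc A C)" .
  define h where "h = (\<lambda>i. if i = 0 then after (tensor (ident A) \<alpha>1) \<sigma> else after (tensor (ident A) \<alpha>2) (Lst ! i))"
  have "image_mset h (mset_set {..length zs}) \<subseteq># mset (concat (map (\<lambda>i. map (\<lambda>y. after y (Lst ! i)) (Sc i)) [0..<length Lst]))"
    by (rule mset_concat_choice) (use W1(2) W2(2) in \<open>auto simp: h_def Sc_def Lst_def\<close>)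
  moreover have "image_mset h (mset_set {..length zs}) \<noteq> {#}"
    by (simp add: mset_set_empty_iff)
  ultimately have "sum_mset (image_mset h (mset_set {..length zs})) \<in> Trf triv (sysc A C)"
    by (rule sub_multiset_sum_Tr[OF L])
  moreover have "sum_mset (image_mset h (mset_set {..length zs}))
      = after (tensor (ident A) \<alpha>1) \<sigma> + after (tensor (ident A) \<alpha>2) (sum_list zs)"
  proof -
    have "sum_mset (image_mset h (mset_set {..length zs})) = (\<Sum>i\<le>length zs. h i)"
      by (simp add: sum_unfold_sum_mset)
    also have "\<dots> = h 0 + (\<Sum>i<length zs. h (Suc i))" by (rule sum.atMost_shift)
    also have "(\<Sum>i<length zs. h (Suc i)) = (\<Sum>i<length zs. after (tensor (ident A) \<alpha>2) (zs ! i))"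
      by (rule sum.cong) (simp_all add: h_def Lst_def nth_append)
    also have "\<dots> = after (tensor (ident A) \<alpha>2) (sum_list zs)"
      by (simp only: after_sum_r[symmetric] sum_list_sum_nth atLeast0LessThan)
    finally show ?thesis by (simp add: h_def)
  qed
  ultimately show ?thesis using that \<rho> \<tau> by metis
qed

lemma det_eff_flag:
  assumes "s \<in> Trf triv A" "\<alpha> \<in> Trf triv C" "prob (deff C) \<alpha> = 1"
  shows "after (deff (sysc A C)) (after (tensor (ident A) \<alpha>) s) = after (deff A) s"
proof -
  have Z: "after (tensor (ident A) \<alpha>) s \<in> Trf triv (sysc A C)"
    using cmp_Tr[OF assms(1) idt_tensor_state_Tr[OF assms(2)]] .
  have "after (deff (sysc A C)) (after (tensor (ident A) \<alpha>) s)
      = after (deff A) (after (tensor (ident A) (deff C)) (after (tensor (ident A) \<alpha>) s))"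
    using product_effect_after[OF det_eff_Tr det_eff_Tr Z] det_eff_sc by simp
  also have "\<dots> = after (deff A) s" using ancilla_readout[OF assms(1,2) det_eff_Tr] assms(3) by simp
  finally show ?thesis .
qed

text \<open>The two perfectly distinguishable states are normalised, since the two
  discriminating effects sum to the deterministic effect.\<close>

lemma distinguishable_normalized:
  obtains C \<alpha>1 \<alpha>2 a1 a2 where "\<alpha>1 \<in> Trf triv C" "\<alpha>2 \<in> Trf triv C"
    "a1 \<in> Trf C triv" "a2 \<in> Trf C triv"
    "prob a1 \<alpha>1 = 1" "prob a2 \<alpha>2 = 1" "prob a1 \<alpha>2 = 0" "prob a2 \<alpha>1 = 0"
    "prob (deff C) \<alpha>1 = 1" "prob (deff C) \<alpha>2 = 1"
proof -
  obtain C \<alpha>1 \<alpha>2 a1 a2 where D: "\<alpha>1 \<in> Trf triv C" "\<alpha>2 \<in> Trf triv C" "[a1, a2] \<in> Tst C triv"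
    "prob a1 \<alpha>1 = 1" "prob a2 \<alpha>2 = 1" "prob a1 \<alpha>2 = 0" "prob a2 \<alpha>1 = 0"
    using distinguishable by blast
  have a: "a1 \<in> Trf C triv" "a2 \<in> Trf C triv" using test_Tr[OF D(3)] by auto
  have e: "deff C = a1 + a2" using observation_test_sum[OF D(3)] by simp
  have "prob (deff C) \<alpha> = prob a1 \<alpha> + prob a2 \<alpha>" if "\<alpha> \<in> Trf triv C" for \<alpha>
    by (rule prob_eqI)
       (simp add: e after_add_l prob_scalar(1)[OF a(1) that] prob_scalar(1)[OF a(2) that] scaleR_left_distrib)
  then show ?thesis using that D a by simp
qed

lemma normalized_flag_state:
  assumes \<sigma>: "refines \<Theta> triv A \<sigma> \<rho>" and \<rho>: "\<rho> \<in> Trf triv A" "\<rho> \<noteq> 0"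
    and \<alpha>: "\<alpha>1 \<in> Trf triv C" "\<alpha>2 \<in> Trf triv C" "prob (deff C) \<alpha>1 = 1" "prob (deff C) \<alpha>2 = 1"
  obtains \<tau> where "\<tau> \<in> Trf triv A" "\<rho> = \<sigma> + \<tau>"
    "normalized \<Theta> (sysc A C) ((1 / prob (deff A) \<rho>) *\<^sub>R
       (after (tensor (ident A) \<alpha>1) \<sigma> + after (tensor (ident A) \<alpha>2) \<tau>))"
proof -
  obtain \<tau> where \<tau>: "\<tau> \<in> Trf triv A" "\<rho> = \<sigma> + \<tau>"
    and S: "after (tensor (ident A) \<alpha>1) \<sigma> + after (tensor (ident A) \<alpha>2) \<tau> \<in> Trf triv (sysc A C)"
    using flag_state_Tr[OF \<sigma> \<alpha>(1,2)] by blast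
  have "after (deff (sysc A C)) (after (tensor (ident A) \<alpha>1) \<sigma> + after (tensor (ident A) \<alpha>2) \<tau>)
      = after (deff A) \<rho>"
    using det_eff_flag[OF refines_Tr[OF \<sigma>] \<alpha>(1,3)] det_eff_flag[OF \<tau>(1) \<alpha>(2,4)] \<tau>(2)
    by (simp add: after_add_r)
  also have "\<dots> = prob (deff A) \<rho> *\<^sub>R ident triv" using prob_scalar(1)[OF det_eff_Tr \<rho>(1)] .
  finally have "prob (deff (sysc A C)) (after (tensor (ident A) \<alpha>1) \<sigma> + after (tensor (ident A) \<alpha>2) \<tau>)
      = prob (deff A) \<rho>" by (rule prob_eqI)
  then show ?thesis using that \<tau> normalize_state[OF S] norm_pos[OF \<rho>]
    unfolding normalized_def St_def by simp
qed

lemma fixed_if_marginal_fixed: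
  assumes \<Psi>: "\<Psi> \<in> Trf triv (sysc A F)" and X: "X \<in> Trf A A"
    and lam: "0 < lam" "lam \<le> 1" and marg: "after (tensor (ident A) (deff F)) \<Psi> = (1 / lam) *\<^sub>R \<rho>"
    and inv: "\<And>\<xi>. refines \<Theta> triv A \<xi> \<rho> \<Longrightarrow> after X \<xi> = \<xi>"
  shows "after (tensor X (ident F)) \<Psi> = \<Psi>"
proof (rule fixed_by_local_action[OF \<Psi> X])
  fix d assume d: "d \<in> Trf F triv"
  have "refines \<Theta> triv A (after (tensor (ident A) d) \<Psi>) ((1 / lam) *\<^sub>R \<rho>)"
    using refines_marginal[OF \<Psi> d] marg by simp
  then have "refines \<Theta> triv A (lam *\<^sub>R after (tensor (ident A) d) \<Psi>) \<rho>"
    using refines_scaleR[where c=lam] lam by fastforce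
  then have "after X (lam *\<^sub>R after (tensor (ident A) d) \<Psi>) = lam *\<^sub>R after (tensor (ident A) d) \<Psi>"
    by (rule inv)
  then show "after X (after (tensor (ident A) d) \<Psi>) = after (tensor (ident A) d) \<Psi>"
    using lam by (simp add: after_scale_r)
qed

lemma eigen_readout:
  assumes \<Psi>: "\<Psi> \<in> Trf triv (sysc A F)" and X: "X \<in> Trf A A" and d: "d \<in> Trf F triv"
    and eig: "after (tensor X (ident F)) \<Psi> = l *\<^sub>R \<Psi>"
  shows "after X (after (tensor (ident A) d) \<Psi>) = l *\<^sub>R after (tensor (ident A) d) \<Psi>"
  using local_ops_commute[OF X d \<Psi>] eig by (simp add: after_scale_r)

lemma refinement_eigen:
  assumes pur: "purification \<Theta>" and \<rho>: "\<rho> \<in> Trf triv A" "\<rho> \<noteq> 0" and T: "T \<in> Tst A A"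
    and inv: "\<And>\<xi>. refines \<Theta> triv A \<xi> \<rho> \<Longrightarrow> after (sum_list T) \<xi> = \<xi>"
    and \<sigma>: "refines \<Theta> triv A \<sigma> \<rho>"
  shows "\<exists>l. \<forall>i<length T. 0 \<le> l i \<and> after (T ! i) \<sigma> = l i *\<^sub>R \<sigma> \<and> after (T ! i) \<rho> = l i *\<^sub>R \<rho>"
proof -
  obtain C \<alpha>1 \<alpha>2 a1 a2 where \<alpha>: "\<alpha>1 \<in> Trf triv C" "\<alpha>2 \<in> Trf triv C"
    "a1 \<in> Trf C triv" "a2 \<in> Trf C triv"
    "prob a1 \<alpha>1 = 1" "prob a2 \<alpha>2 = 1" "prob a1 \<alpha>2 = 0" "prob a2 \<alpha>1 = 0"
    "prob (deff C) \<alpha>1 = 1" "prob (deff C) \<alpha>2 = 1"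
    by (rule distinguishable_normalized)
  define lam where "lam = prob (deff A) \<rho>"
  have lam: "0 < lam" "lam \<le> 1"
    unfolding lam_def using norm_pos[OF \<rho>] prob_scalar(3)[OF det_eff_Tr \<rho>(1)] by auto
  obtain \<tau> where \<tau>: "\<tau> \<in> Trf triv A" "\<rho> = \<sigma> + \<tau>" and
    S: "normalized \<Theta> (sysc A C) ((1 / lam) *\<^sub>R
       (after (tensor (ident A) \<alpha>1) \<sigma> + after (tensor (ident A) \<alpha>2) \<tau>))"
    using normalized_flag_state[OF \<sigma> \<rho> \<alpha>(1,2,9,10)] unfolding lam_def by blast
  then obtain B \<Psi> where \<Psi>: "normalized \<Theta> (sysc (sysc A C) B) \<Psi>" "pure_state \<Theta> (sysc (sysc A C) B) \<Psi>"
    "marg \<Theta> (sysc A C) B \<Psi> = (1 / lam) *\<^sub>R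
       (after (tensor (ident A) \<alpha>1) \<sigma> + after (tensor (ident A) \<alpha>2) \<tau>)"
    using pur unfolding purification_def by blast
  define F where "F = sysc C B"
  have \<Psi>_Tr: "\<Psi> \<in> Trf triv (sysc A F)" and atomic: "atomic \<Theta> triv (sysc A F) \<Psi>"
    using \<Psi>(1,2) unfolding normalized_def St_def pure_state_def F_def by (simp_all add: sc_assoc)
  \<comment> \<open>Applying a (x) e_B to the ancilla reads off the flag.\<close>
  have readout: "after (tensor (ident A) (tensor a (deff B))) \<Psi>
      = (1 / lam) *\<^sub>R (prob a \<alpha>1 *\<^sub>R \<sigma> + prob a \<alpha>2 *\<^sub>R \<tau>)" if a: "a \<in> Trf C triv" for a
    using marginal_readout[OF \<Psi>(1)[unfolded normalized_def St_def, THEN conjunct1] a] \<Psi>(3)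
      ancilla_readout[OF refines_Tr[OF \<sigma>] \<alpha>(1) a] ancilla_readout[OF \<tau>(1) \<alpha>(2) a]
    by (simp add: after_scale_r after_add_r)
  have ancilla_Tr: "tensor a (deff B) \<in> Trf F triv" if "a \<in> Trf C triv" for a
    using tens_Tr[OF that det_eff_Tr] unfolding F_def by simp
  have "after (tensor (ident A) (deff F)) \<Psi> = (1 / lam) *\<^sub>R \<rho>"
    using readout[OF det_eff_Tr] \<alpha>(9,10) \<tau>(2) det_eff_sc[of C B] unfolding F_def by simp
  from fixed_if_marginal_fixed[OF \<Psi>_Tr test_sum_Tr[OF T] lam this inv]
  have "after (tensor (sum_list T) (ident F)) \<Psi> = \<Psi>" .
  then obtain l where l: "\<forall>i<length T. 0 \<le> l i \<and> after (tensor (T ! i) (ident F)) \<Psi> = l i *\<^sub>R \<Psi>"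
    using pure_state_eigen[OF \<Psi>_Tr atomic T] by metis
  have cancel: "x = c *\<^sub>R y" if "(1 / lam) *\<^sub>R x = (c / lam) *\<^sub>R y" for x y :: 't and c
  proof -
    have "lam *\<^sub>R ((1 / lam) *\<^sub>R x) = lam *\<^sub>R ((c / lam) *\<^sub>R y)" using that by simp
    then show ?thesis using lam(1) by simp
  qed
  have "after (T ! i) \<sigma> = l i *\<^sub>R \<sigma> \<and> after (T ! i) \<tau> = l i *\<^sub>R \<tau>" if i: "i < length T" for i
  proof -
    have Ti: "T ! i \<in> Trf A A" using test_Tr[OF T] i by auto
    note eig = eigen_readout[OF \<Psi>_Tr Ti ancilla_Tr, of _ "l i"]
    show ?thesis
      using eig[OF \<alpha>(3)] eig[OF \<alpha>(4)] l i lam(1) readout[OF \<alpha>(3)] readout[OF \<alpha>(4)] \<alpha>(5-8)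
      by (simp add: after_scale_r cancel)
  qed
  then show ?thesis using l \<tau>(2) by (intro exI[of _ l]) (auto simp: after_add_r scaleR_right_distrib)
qed

definition non_disturbing :: "'t list \<Rightarrow> 't set \<Rightarrow> bool" where
  "non_disturbing T S \<longleftrightarrow> (\<forall>\<sigma>\<in>S. (\<Sum>i<length T. after (T ! i) \<sigma>) = \<sigma>)"

definition acts_as_scalars :: "'t list \<Rightarrow> 't set \<Rightarrow> bool" where
  "acts_as_scalars T S \<longleftrightarrow> (\<exists>p::nat \<Rightarrow> real. (\<forall>i<length T. 0 \<le> p i) \<and>
     (\<forall>\<sigma>\<in>S. \<forall>i<length T. after (T ! i) \<sigma> = p i *\<^sub>R \<sigma>))"

text \<open>Both properties only concern linear maps, so they pass to the span.\<close>

lemma non_disturbing_span: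
  assumes "non_disturbing T S" "S' \<subseteq> span S" shows "non_disturbing T S'"
proof -
  have "after (sum_list T) \<sigma> = id \<sigma>" if "\<sigma> \<in> span S" for \<sigma>
    by (rule linear_eq_on_span[OF linear_after_r linear_id _ that])
       (use assms(1) in \<open>simp add: non_disturbing_def sum_after\<close>)
  then show ?thesis using assms(2) unfolding non_disturbing_def sum_after by auto
qed

lemma acts_as_scalars_span:
  assumes "acts_as_scalars T S" "S' \<subseteq> span S" shows "acts_as_scalars T S'"
proof -
  obtain p where p: "\<forall>i<length T. 0 \<le> p i" "\<forall>\<sigma>\<in>S. \<forall>i<length T. after (T ! i) \<sigma> = p i *\<^sub>R \<sigma>"
    using assms(1) unfolding acts_as_scalars_def by blast
  have "after (T ! i) \<sigma> = p i *\<^sub>R \<sigma>" if "\<sigma> \<in> span S" "i < length T" for \<sigma> i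
    by (rule linear_eq_on_span[OF linear_after_r linear_scale_self _ that(1)]) (use p(2) that(2) in blast)
  then show ?thesis using p(1) assms(2) unfolding acts_as_scalars_def by blast
qed

text \<open>Easy direction: a test whose outcomes act by scalars on a set of states is
  non-disturbing, because its channel preserves the deterministic effect and so
  the scalars sum to one.\<close>

lemma acts_as_scalars_non_disturbing:
  assumes T: "T \<in> Tst A A" and S: "S \<subseteq> Trf triv A" and scalars: "acts_as_scalars T S"
  shows "non_disturbing T S"
  unfolding non_disturbing_def
proof
  obtain p where p: "\<forall>\<sigma>\<in>S. \<forall>i<length T. after (T ! i) \<sigma> = p i *\<^sub>R \<sigma>"
    using scalars unfolding acts_as_scalars_def by blast
  fix \<sigma> assume \<sigma>: "\<sigma> \<in> S"
  then have \<sigma>_Tr: "\<sigma> \<in> Trf triv A" using S by blast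
  have sum: "after (sum_list T) \<sigma> = (\<Sum>i<length T. p i) *\<^sub>R \<sigma>"
    using p \<sigma> by (simp add: sum_after[symmetric] scaleR_sum_left)
  show "(\<Sum>i<length T. after (T ! i) \<sigma>) = \<sigma>"
  proof (cases "\<sigma> = 0")
    case True then show ?thesis by (simp add: after_zero_r)
  next
    case False
    have "after (deff A) \<sigma> = after (after (deff A) (sum_list T)) \<sigma>"
      using det_eff_after_test[OF T] by simp
    also have "\<dots> = (\<Sum>i<length T. p i) *\<^sub>R after (deff A) \<sigma>"
      using cmp_assoc[OF \<sigma>_Tr test_sum_Tr[OF T] det_eff_Tr] sum by (simp add: after_scale_r)
    finally have "prob (deff A) \<sigma> *\<^sub>R ident triv = ((\<Sum>i<length T. p i) * prob (deff A) \<sigma>) *\<^sub>R ident triv"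
      using prob_scalar(1)[OF det_eff_Tr \<sigma>_Tr] by simp
    then have "prob (deff A) \<sigma> = (\<Sum>i<length T. p i) * prob (deff A) \<sigma>" by (rule scalar_cancel)
    with norm_pos[OF \<sigma>_Tr False] have "(\<Sum>i<length T. p i) = 1" by simp
    then show ?thesis using sum by (simp add: sum_after)
  qed
qed

text \<open>The scalars are those of rho itself, which all
  refinements share by refinement_eigen; for rho = 0 the refinement set is {0}.\<close>

lemma non_disturbing_acts_as_scalars:
  assumes pur: "purification \<Theta>" and \<rho>: "\<rho> \<in> Trf triv A" and T: "T \<in> Tst A A"
    and nd: "non_disturbing T (refset \<Theta> triv A \<rho>)"
  shows "acts_as_scalars T (refset \<Theta> triv A \<rho>)"
proof (cases "\<rho> = 0")
  case True
  then have "refset \<Theta> triv A \<rho> \<subseteq> {0}" using refines_zero unfolding refset_def by blast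
  then show ?thesis unfolding acts_as_scalars_def
    by (intro exI[of _ "\<lambda>_. 0"]) (auto simp: after_zero_r)
next
  case False
  have fixes_refinements: "\<And>\<xi>. refines \<Theta> triv A \<xi> \<rho> \<Longrightarrow> after (sum_list T) \<xi> = \<xi>"
    using nd unfolding non_disturbing_def refset_def sum_after by blast
  have eigen: "\<exists>l. \<forall>i<length T. 0 \<le> l i \<and> after (T ! i) \<sigma> = l i *\<^sub>R \<sigma> \<and> after (T ! i) \<rho> = l i *\<^sub>R \<rho>"
    if "refines \<Theta> triv A \<sigma> \<rho>" for \<sigma>
    using refinement_eigen[OF pur \<rho> False T] fixes_refinements that by blast
  obtain l where l: "\<forall>i<length T. 0 \<le> l i \<and> after (T ! i) \<rho> = l i *\<^sub>R \<rho>"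
    using eigen[OF refines_refl[OF \<rho>]] by blast
  have "after (T ! i) \<sigma> = l i *\<^sub>R \<sigma>" if \<sigma>: "refines \<Theta> triv A \<sigma> \<rho>" and i: "i < length T" for \<sigma> i
  proof -
    obtain m where m: "\<forall>i<length T. after (T ! i) \<sigma> = m i *\<^sub>R \<sigma> \<and> after (T ! i) \<rho> = m i *\<^sub>R \<rho>"
      using eigen[OF \<sigma>] by blast
    have "m i *\<^sub>R \<rho> = l i *\<^sub>R \<rho>" using l m i by metis
    then have "m i = l i" using False by (simp add: scaleR_cancel_right)
    then show ?thesis using m i by metis
  qed
  then show ?thesis using l unfolding acts_as_scalars_def refset_def by blast
qed

end

theorem mainTheorem5:
  fixes \<Theta> :: "('s, 't::real_normed_vector) opt"
    and A :: 's and \<rho> :: 't and T :: "'t list"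
  assumes "OPT \<Theta>" and "purification \<Theta>"
    and "\<rho> \<in> St \<Theta> A" and "T \<in> Tests \<Theta> A A"
  shows "((\<forall>\<sigma>\<in>refset \<Theta> (Isys \<Theta>) A \<rho>. (\<Sum>i<length T. cmp \<Theta> (T ! i) \<sigma>) = \<sigma>)
          \<longleftrightarrow> (\<exists>p::nat \<Rightarrow> real. (\<forall>i<length T. 0 \<le> p i) \<and>
                (\<forall>\<sigma>\<in>refset \<Theta> (Isys \<Theta>) A \<rho>. \<forall>i<length T. cmp \<Theta> (T ! i) \<sigma> = p i *\<^sub>R \<sigma>)))
       \<and> (internal \<Theta> A \<rho> \<longrightarrow>
          ((\<forall>\<sigma>\<in>St \<Theta> A. (\<Sum>i<length T. cmp \<Theta> (T ! i) \<sigma>) = \<sigma>)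
           \<longleftrightarrow> (\<exists>p::nat \<Rightarrow> real. (\<forall>i<length T. 0 \<le> p i) \<and>
                 (\<forall>\<sigma>\<in>St \<Theta> A. \<forall>i<length T. cmp \<Theta> (T ! i) \<sigma> = p i *\<^sub>R \<sigma>))))"
proof -
  interpret opt_frame \<Theta> using assms(1) by (rule OPT_opt_frame)
  let ?D = "refset \<Theta> (Isys \<Theta>) A \<rho>"
  have D_states: "?D \<subseteq> St \<Theta> A" unfolding refset_def St_def using refines_Tr by blast
  have on_D: "non_disturbing T ?D \<longleftrightarrow> acts_as_scalars T ?D"
    using non_disturbing_acts_as_scalars[OF assms(2) assms(3)[unfolded St_def] assms(4)]
      acts_as_scalars_non_disturbing[OF assms(4) D_states[unfolded St_def]] by (rule iffI)
  have on_states: "non_disturbing T (St \<Theta> A) \<longleftrightarrow> acts_as_scalars T (St \<Theta> A)"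
    if "internal \<Theta> A \<rho>"
  proof
    have D_spans: "St \<Theta> A \<subseteq> span ?D" using that span_superset unfolding internal_def St_def by blast
    have D_in_span: "?D \<subseteq> span (St \<Theta> A)" using D_states span_superset by blast
    show "acts_as_scalars T (St \<Theta> A)" if "non_disturbing T (St \<Theta> A)"
      using acts_as_scalars_span[OF on_D[THEN iffD1, OF non_disturbing_span[OF that D_in_span]] D_spans] .
    show "non_disturbing T (St \<Theta> A)" if "acts_as_scalars T (St \<Theta> A)"
      using non_disturbing_span[OF on_D[THEN iffD2, OF acts_as_scalars_span[OF that D_in_span]] D_spans] .
  qed
  show ?thesis
    unfolding non_disturbing_def[symmetric] acts_as_scalars_def[symmetric]
    using on_D on_states by blast
qed

end
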